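(* For any $p\in[1,2)$, \[ \|\nabla u\|_{\mathrm L^2(\mathbb T^2)}^2+\|u\|_{\mathrm L^p(\mathbb T^2)}^2\ge\|u\|_{\mathrm L^2(\mathbb T^2)}^2\quad\forall\,u\in\mathrm H^1(\mathbb T^2). \]
   Context: $\mathbb T^2=\mathbb S^1\times\mathbb S^1\approx[-\pi,\pi)^2$ with periodic boundary conditions, equipped with the uniform probability measure $dx\,dy/(4\pi^2)$; all norms are with respect to this measure. *)

theory Defs
  imports "HOL-Analysis.Analysis"
begin

text \<open>The torus T^2 is identified with the fundamental domain [-pi,pi)^2 with
periodic boundary conditions. Functions on T^2 are functions on the plane whose
values on the fundamental domain matter. The measure is the uniform
probability measure dx dy/(4 pi^2) on the fundamental domain.\<close>

definition torus_dom :: "(real \<times> real) set" where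
  "torus_dom = {-pi..<pi} \<times> {-pi..<pi}"

definition torus_measure :: "(real \<times> real) measure" where
  "torus_measure = uniform_measure lborel torus_dom"

definition Lp_norm :: "real \<Rightarrow> (real \<times> real \<Rightarrow> real) \<Rightarrow> real" where
  "Lp_norm p u = (\<integral>z. \<bar>u z\<bar> powr p \<partial>torus_measure) powr (1 / p)"

text \<open>Test functions: continuously differentiable functions on the plane,
2 pi-periodic in each variable (i.e. C^1 functions on T^2), with partial
derivatives phix, phiy.\<close>
definition periodic_C1_test ::
  "(real \<times> real \<Rightarrow> real) \<Rightarrow> (real \<times> real \<Rightarrow> real) \<Rightarrow> (real \<times> real \<Rightarrow> real) \<Rightarrow> bool" where
  "periodic_C1_test phi phix phiy \<longleftrightarrow>
     continuous_on UNIV phix \<and> continuous_on UNIV phiy \<and>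
     (\<forall>z. (phi has_derivative (\<lambda>h. fst h * phix z + snd h * phiy z)) (at z)) \<and>
     (\<forall>x y. phi (x + 2 * pi, y) = phi (x, y) \<and> phi (x, y + 2 * pi) = phi (x, y))"

definition L2_torus :: "(real \<times> real \<Rightarrow> real) \<Rightarrow> bool" where
  "L2_torus f \<longleftrightarrow> f \<in> borel_measurable torus_measure \<and>
                   integrable torus_measure (\<lambda>z. (f z)\<^sup>2)"

text \<open>(g1, g2) is a weak gradient of u on T^2, and u, g1, g2 are in L^2:
this is exactly u \<in> H^1(T^2) with weak gradient (g1,g2).\<close>
definition H1_weak_gradient ::
  "(real \<times> real \<Rightarrow> real) \<Rightarrow> (real \<times> real \<Rightarrow> real) \<Rightarrow> (real \<times> real \<Rightarrow> real) \<Rightarrow> bool" where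
  "H1_weak_gradient u g1 g2 \<longleftrightarrow>
     L2_torus u \<and> L2_torus g1 \<and> L2_torus g2 \<and>
     (\<forall>phi phix phiy. periodic_C1_test phi phix phiy \<longrightarrow>
        (\<integral>z. u z * phix z \<partial>torus_measure) = - (\<integral>z. g1 z * phi z \<partial>torus_measure) \<and>
        (\<integral>z. u z * phiy z \<partial>torus_measure) = - (\<integral>z. g2 z * phi z \<partial>torus_measure))"

definition grad_L2_sq :: "(real \<times> real \<Rightarrow> real) \<Rightarrow> (real \<times> real \<Rightarrow> real) \<Rightarrow> real" where
  "grad_L2_sq g1 g2 = (\<integral>z. (g1 z)\<^sup>2 + (g2 z)\<^sup>2 \<partial>torus_measure)"

end

theory Submission
  imports Defs "HOL-Probability.Probability"
begin

text \<open>Expand \<open>u\<close> in the real trigonometric basis \<open>E\<^sub>k\<^sub>l(x, y) = e\<^sub>k(x) e\<^sub>l(y)\<close> of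
  \<open>L\<^sup>2(T\<^sup>2)\<close>, with coefficients \<open>c\<^sub>k\<^sub>l\<close>. Since \<open>\<partial>\<^sub>x E\<^sub>k\<^sub>l = -k E\<^sub>-\<^sub>k\<^sub>l\<close>, testing the weak
  gradient against \<open>E\<^sub>k\<^sub>l\<close> identifies the coefficients of \<open>g\<^sub>1, g\<^sub>2\<close> as \<open>k c\<^sub>-\<^sub>k\<^sub>l, l c\<^sub>k\<^sub>-\<^sub>l\<close>,
  so Bessel's inequality gives \<open>\<Sum> (k\<^sup>2 + l\<^sup>2) c\<^sub>k\<^sub>l\<^sup>2 \<le> \<parallel>\<nabla>u\<parallel>\<^sup>2\<close>. Trigonometric polynomials are
  dense in \<open>L\<^sup>2\<close> (Stone-Weierstrass on the circle, then a Dynkin argument from boxes to all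
  Borel sets and simple functions), so \<open>\<parallel>u\<parallel>\<^sub>2\<^sup>2 = \<Sum> c\<^sub>k\<^sub>l\<^sup>2 \<le> c\<^sub>0\<^sub>0\<^sup>2 + \<parallel>\<nabla>u\<parallel>\<^sup>2\<close> because
  \<open>k\<^sup>2 + l\<^sup>2 \<ge> 1\<close> off the origin. Finally \<open>c\<^sub>0\<^sub>0\<close> is the mean of \<open>u\<close>, and
  \<open>|c\<^sub>0\<^sub>0| \<le> \<parallel>u\<parallel>\<^sub>1 \<le> \<parallel>u\<parallel>\<^sub>p\<close> on a probability space.\<close>

definition circle_measure :: "real measure" where
  "circle_measure = uniform_measure lborel {-pi..<pi}"

lemma emeasure_lborel_period: "emeasure lborel {-pi..<pi} = ennreal (2 * pi)"
  by (simp add: emeasure_lborel_Ico)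

interpretation circle: prob_space circle_measure
  unfolding circle_measure_def
  by (rule prob_space_uniform_measure) (simp_all add: emeasure_lborel_period)

lemma sets_circle_measure [simp, measurable_cong]: "sets circle_measure = sets borel"
  by (simp add: circle_measure_def)

lemma space_circle_measure [simp]: "space circle_measure = UNIV"
  by (simp add: circle_measure_def)

lemma AE_circle_measure: "AE x in circle_measure. -pi \<le> x \<and> x < pi"
  unfolding circle_measure_def by (rule AE_uniform_measureI) auto

lemma measure_circle_Icc_le: "measure circle_measure {c..d} \<le> (d - c) / (2 * pi)" if "c \<le> d"
proof -
  have "measure circle_measure {c..d} = measure lborel ({-pi..<pi} \<inter> {c..d}) / (2 * pi)"
    unfolding circle_measure_def by (simp add: emeasure_lborel_period)
  also have "measure lborel ({-pi..<pi} \<inter> {c..d}) \<le> measure lborel {c..d}"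
    using that by (intro measure_mono_fmeasurable) (auto simp: fmeasurable_def emeasure_lborel_Icc)
  finally show ?thesis
    using that by (simp add: divide_right_mono)
qed

lemma integral_circle_measure:
  assumes [measurable]: "f \<in> borel_measurable borel"
  shows "integral\<^sup>L circle_measure f = (LBINT x. f x * indicator {-pi..pi} x) / (2 * pi)"
proof -
  have density: "circle_measure = density lborel (\<lambda>x. ennreal (indicator {-pi..<pi} x / (2 * pi)))"
    unfolding circle_measure_def uniform_measure_def emeasure_lborel_period
    by (intro arg_cong[where f="density lborel"] ext)
       (simp add: divide_ennreal[symmetric] split: split_indicator)
  have "integral\<^sup>L circle_measure f = (LBINT x. (indicator {-pi..<pi} x / (2 * pi)) *\<^sub>R f x)"
    unfolding density by (rule integral_density) auto
  also have "\<dots> = (LBINT x. f x * indicator {-pi..pi} x / (2 * pi))"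
    by (intro integral_cong_AE)
       (auto intro!: eventually_mono[OF AE_lborel_singleton[of pi]] split: split_indicator)
  finally show ?thesis
    by simp
qed

lemma integral_circle_cos: "(\<integral>x. cos (of_int k * x) \<partial>circle_measure) = (if k = 0 then 1 else 0)"
proof (cases "k = 0")
  case False
  have "(LBINT x. cos (of_int k * x) * indicator {-pi..pi} x)
      = sin (of_int k * pi) / of_int k - sin (of_int k * (-pi)) / of_int k"
    by (rule integral_FTC_Icc_real[where F="\<lambda>x. sin (of_int k * x) / of_int k"])
       (use False in \<open>auto intro!: derivative_eq_intros\<close>)
  with False show ?thesis
    by (simp add: integral_circle_measure sin_times_pi_eq_0)
qed (simp add: circle.prob_space[simplified])

lemma integral_circle_sin: "(\<integral>x. sin (of_int k * x) \<partial>circle_measure) = 0"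
proof (cases "k = 0")
  case False
  have "(LBINT x. sin (of_int k * x) * indicator {-pi..pi} x)
      = - cos (of_int k * pi) / of_int k - - cos (of_int k * (-pi)) / of_int k"
    by (rule integral_FTC_Icc_real[where F="\<lambda>x. - cos (of_int k * x) / of_int k"])
       (use False in \<open>auto intro!: derivative_eq_intros\<close>)
  then show ?thesis
    by (simp add: integral_circle_measure)
qed simp

lemma integrable_circle_bounded:
  fixes B :: real
  shows "f \<in> borel_measurable borel \<Longrightarrow> (\<And>x. \<bar>f x\<bar> \<le> B) \<Longrightarrow> integrable circle_measure f"
  by (rule circle.integrable_const_bound[where B=B]) auto

section \<open>The real trigonometric basis\<close>

text \<open>Indexing by \<^typ>\<open>int\<close>, with cosines at positive and sines at negative indices, makes
  differentiation the index map \<open>k \<mapsto> -k\<close> times the factor \<open>-k\<close>.\<close>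

definition trig_basis :: "int \<Rightarrow> real \<Rightarrow> real" where
  "trig_basis k x =
     (if k = 0 then 1 else if 0 < k then sqrt 2 * cos (of_int k * x) else sqrt 2 * sin (of_int (- k) * x))"

lemma trig_basis_0 [simp]: "trig_basis 0 x = 1"
  by (simp add: trig_basis_def)

lemma trig_basis_cases:
  obtains "k = 0" "trig_basis k = (\<lambda>x. 1)"
  | "0 < k" "trig_basis k = (\<lambda>x. sqrt 2 * cos (of_int k * x))"
  | "k < 0" "trig_basis k = (\<lambda>x. sqrt 2 * sin (of_int (- k) * x))"
  by (cases k "0::int" rule: linorder_cases) (auto simp: trig_basis_def[abs_def])

lemma continuous_on_trig_basis: "continuous_on A (trig_basis k)"
  by (cases k rule: trig_basis_cases) (auto intro!: continuous_intros)

lemma borel_measurable_trig_basis [measurable]: "trig_basis k \<in> borel_measurable borel"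
  by (rule borel_measurable_continuous_onI[OF continuous_on_trig_basis])

lemma abs_trig_basis_le: "\<bar>trig_basis k x\<bar> \<le> sqrt 2"
proof -
  have "sqrt 2 * \<bar>cos t\<bar> \<le> sqrt 2" "sqrt 2 * \<bar>sin t\<bar> \<le> sqrt 2" "(1::real) \<le> sqrt 2" for t
    by (auto intro: mult_left_le)
  then show ?thesis
    by (cases k rule: trig_basis_cases) (auto simp: abs_mult)
qed

lemma integral_trig_basis: "(\<integral>x. trig_basis k x \<partial>circle_measure) = (if k = 0 then 1 else 0)"
  using integral_circle_cos[of k] integral_circle_sin[of "- k"] circle.prob_space
  by (cases k rule: trig_basis_cases) auto

lemma cos_times_cos_int:
  "2 * (cos (of_int m * x) * cos (of_int n * x)) = cos (of_int (m - n) * x) + cos (of_int (m + n) * (x::real))"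
  by (simp add: cos_times_cos left_diff_distrib distrib_right)

lemma sin_times_sin_int:
  "2 * (sin (of_int m * x) * sin (of_int n * x)) = cos (of_int (m - n) * x) - cos (of_int (m + n) * (x::real))"
  by (simp add: sin_times_sin left_diff_distrib distrib_right)

lemma sin_times_cos_int:
  "2 * (sin (of_int m * x) * cos (of_int n * x)) = sin (of_int (m + n) * x) + sin (of_int (m - n) * (x::real))"
  by (simp add: sin_times_cos left_diff_distrib distrib_right)

lemma sqrt2_mult_sqrt2: "sqrt 2 * a * (sqrt 2 * b) = 2 * (a * b :: real)"
proof -
  have "sqrt 2 * a * (sqrt 2 * b) = (sqrt 2 * sqrt 2) * (a * b)"
    by (simp only: mult_ac)
  then show ?thesis
    by simp
qed

lemma integrable_circle_cos [simp]: "integrable circle_measure (\<lambda>x. cos (c * x))"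
  and integrable_circle_sin [simp]: "integrable circle_measure (\<lambda>x. sin (c * x))"
  by (auto intro!: integrable_circle_bounded[where B=1])

lemma trig_basis_orthonormal:
  "(\<integral>x. trig_basis k x * trig_basis l x \<partial>circle_measure) = (if k = l then 1 else 0)"
proof (cases "k = 0 \<or> l = 0")
  case True
  then show ?thesis
    using integral_trig_basis[of k] integral_trig_basis[of l] by auto
next
  case False
  then show ?thesis
  proof (cases k rule: trig_basis_cases; cases l rule: trig_basis_cases)
    assume "0 < k" "0 < l" and k: "trig_basis k = (\<lambda>x. sqrt 2 * cos (of_int k * x))"
      and l: "trig_basis l = (\<lambda>x. sqrt 2 * cos (of_int l * x))"
    have "(\<lambda>x. trig_basis k x * trig_basis l x) = (\<lambda>x. cos (of_int (k - l) * x) + cos (of_int (k + l) * x))"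
      by (simp only: k l sqrt2_mult_sqrt2 cos_times_cos_int)
    then show ?thesis
      using \<open>0 < k\<close> \<open>0 < l\<close> by (simp add: integral_circle_cos del: of_int_diff of_int_add)
  next
    assume "k < 0" "l < 0" and k: "trig_basis k = (\<lambda>x. sqrt 2 * sin (of_int (- k) * x))"
      and l: "trig_basis l = (\<lambda>x. sqrt 2 * sin (of_int (- l) * x))"
    have "(\<lambda>x. trig_basis k x * trig_basis l x) = (\<lambda>x. cos (of_int (- k - - l) * x) - cos (of_int (- k + - l) * x))"
      by (simp only: k l sqrt2_mult_sqrt2 sin_times_sin_int)
    then show ?thesis
      using \<open>k < 0\<close> \<open>l < 0\<close> by (simp add: integral_circle_cos del: of_int_diff of_int_add of_int_minus)
  next
    assume k: "trig_basis k = (\<lambda>x. sqrt 2 * cos (of_int k * x))"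
      and l: "trig_basis l = (\<lambda>x. sqrt 2 * sin (of_int (- l) * x))" and "0 < k" "l < 0"
    have "(\<lambda>x. trig_basis k x * trig_basis l x) = (\<lambda>x. sin (of_int (- l + k) * x) + sin (of_int (- l - k) * x))"
      by (simp only: k l sqrt2_mult_sqrt2 mult.commute[of "cos _"] sin_times_cos_int)
    then show ?thesis
      using \<open>0 < k\<close> \<open>l < 0\<close> by (simp add: integral_circle_sin del: of_int_diff of_int_add of_int_minus)
  next
    assume k: "trig_basis k = (\<lambda>x. sqrt 2 * sin (of_int (- k) * x))"
      and l: "trig_basis l = (\<lambda>x. sqrt 2 * cos (of_int l * x))" and "k < 0" "0 < l"
    have "(\<lambda>x. trig_basis k x * trig_basis l x) = (\<lambda>x. sin (of_int (- k + l) * x) + sin (of_int (- k - l) * x))"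
      by (simp only: k l sqrt2_mult_sqrt2 sin_times_cos_int)
    then show ?thesis
      using \<open>k < 0\<close> \<open>0 < l\<close> by (simp add: integral_circle_sin del: of_int_diff of_int_add of_int_minus)
  qed simp_all
qed

lemma trig_basis_has_derivative:
  "(trig_basis k has_real_derivative - of_int k * trig_basis (- k) x) (at x)"
proof (cases k rule: trig_basis_cases)
  case 2
  then have "trig_basis (- k) x = sqrt 2 * sin (of_int k * x)"
    by (simp add: trig_basis_def)
  with 2 show ?thesis
    by (auto intro!: derivative_eq_intros)
next
  case 3
  then have "trig_basis (- k) x = sqrt 2 * cos (of_int (- k) * x)"
    by (simp add: trig_basis_def)
  with 3 show ?thesis
    by (auto intro!: derivative_eq_intros)
qed simp

lemma trig_basis_periodic: "trig_basis k (x + 2 * pi) = trig_basis k x"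
proof -
  have "of_int j * (x + 2 * pi) = of_int j * x + 2 * pi * of_int j" for j :: int
    by (simp add: algebra_simps)
  then show ?thesis
    by (cases k rule: trig_basis_cases) (simp_all add: cos_add sin_add del: of_int_minus)
qed

lemma torus_measure_eq_pair: "torus_measure = circle_measure \<Otimes>\<^sub>M circle_measure"
proof (rule pair_measure_eqI[symmetric])
  show "sigma_finite_measure circle_measure"
    by (rule circle.sigma_finite_measure_axioms)
  then show "sigma_finite_measure circle_measure" .
  have "sets (circle_measure \<Otimes>\<^sub>M circle_measure) = sets (borel \<Otimes>\<^sub>M borel :: (real \<times> real) measure)"
    by (rule sets_pair_measure_cong) auto
  also have "\<dots> = sets torus_measure"
    by (simp only: borel_prod) (simp add: torus_measure_def)
  finally show "sets (circle_measure \<Otimes>\<^sub>M circle_measure) = sets torus_measure" .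
next
  fix A B :: "real set" assume "A \<in> sets circle_measure" "B \<in> sets circle_measure"
  then have [measurable]: "A \<in> sets borel" "B \<in> sets borel"
    by auto
  have finite: "emeasure lborel ({-pi..<pi} \<inter> C) < \<top>" for C
    by (rule le_less_trans[OF emeasure_mono[of _ "{-pi..<pi}"]]) (auto simp: emeasure_lborel_period)
  have Times: "emeasure lborel (C \<times> D) = emeasure lborel C * emeasure lborel D"
    if "C \<in> sets borel" "D \<in> sets borel" for C D :: "real set"
  proof -
    have "emeasure (lborel \<Otimes>\<^sub>M lborel) (C \<times> D) = emeasure lborel C * emeasure lborel D"
      using that by (intro lborel.emeasure_pair_measure_Times) auto
    then show ?thesis
      by (simp add: lborel_prod)
  qed
  have "torus_dom \<inter> A \<times> B = ({-pi..<pi} \<inter> A) \<times> ({-pi..<pi} \<inter> B)"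
    by (auto simp: torus_dom_def)
  then have "emeasure torus_measure (A \<times> B)
      = emeasure lborel ({-pi..<pi} \<inter> A) * emeasure lborel ({-pi..<pi} \<inter> B)
        / (ennreal (2 * pi) * ennreal (2 * pi))"
    unfolding torus_measure_def
    by (subst emeasure_uniform_measure) (auto simp: torus_dom_def Times emeasure_lborel_period intro!: borel_Times)
  also have "\<dots> = emeasure circle_measure A * emeasure circle_measure B"
    using finite[of A] finite[of B]
    by (simp add: circle_measure_def emeasure_lborel_period divide_ennreal_def
        ennreal_inverse_mult mult_ac)
  finally show "emeasure circle_measure A * emeasure circle_measure B = emeasure torus_measure (A \<times> B)"
    by simp
qed

interpretation torus: prob_space torus_measure
  unfolding torus_measure_eq_pair by (intro prob_space_pair circle.prob_space_axioms)

lemma sets_torus_measure [simp, measurable_cong]: "sets torus_measure = sets borel"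
  by (simp add: torus_measure_def)

lemma space_torus_measure [simp]: "space torus_measure = UNIV"
  by (simp add: torus_measure_def)

lemma AE_torus_measure: "AE z in torus_measure. z \<in> {-pi..<pi} \<times> {-pi..<pi}"
  unfolding torus_measure_def torus_dom_def by (rule AE_uniform_measureI) (auto intro!: borel_Times)

lemma integrable_torus_bounded:
  fixes B :: real
  shows "f \<in> borel_measurable torus_measure \<Longrightarrow> (\<And>z. \<bar>f z\<bar> \<le> B) \<Longrightarrow> integrable torus_measure f"
  by (rule torus.integrable_const_bound[where B=B]) auto

lemma integral_torus_tensor:
  fixes f g :: "real \<Rightarrow> real" and Bf Bg :: real
  assumes [measurable]: "f \<in> borel_measurable borel" "g \<in> borel_measurable borel"
    and "\<And>x. \<bar>f x\<bar> \<le> Bf" "\<And>y. \<bar>g y\<bar> \<le> Bg"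
  shows "(\<integral>z. f (fst z) * g (snd z) \<partial>torus_measure)
    = integral\<^sup>L circle_measure f * integral\<^sup>L circle_measure g"
proof -
  interpret pair_prob_space circle_measure circle_measure ..
  have "integrable torus_measure (\<lambda>z. f (fst z) * g (snd z))"
  proof (rule integrable_torus_bounded[where B="Bf * Bg"])
    show "\<bar>f (fst z) * g (snd z)\<bar> \<le> Bf * Bg" for z
      using assms(3,4) order_trans[OF abs_ge_zero assms(3)] by (auto simp: abs_mult intro!: mult_mono)
  qed (unfold torus_measure_eq_pair, measurable)
  then show ?thesis
    unfolding torus_measure_eq_pair by (simp add: integral_fst'[symmetric])
qed

definition torus_basis :: "int \<times> int \<Rightarrow> real \<times> real \<Rightarrow> real" where
  "torus_basis q z = trig_basis (fst q) (fst z) * trig_basis (snd q) (snd z)"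

lemma continuous_on_torus_basis: "continuous_on A (torus_basis q)"
  unfolding torus_basis_def[abs_def]
  by (intro continuous_intros continuous_on_compose2[OF continuous_on_trig_basis]) auto

lemma abs_torus_basis_le: "\<bar>torus_basis q z\<bar> \<le> 2"
proof -
  have "\<bar>torus_basis q z\<bar> \<le> sqrt 2 * sqrt 2"
    unfolding torus_basis_def abs_mult by (intro mult_mono abs_trig_basis_le) auto
  then show ?thesis
    by simp
qed

lemma torus_basis_orthonormal:
  "(\<integral>z. torus_basis p z * torus_basis q z \<partial>torus_measure) = (if p = q then 1 else 0)"
proof -
  have "\<bar>trig_basis k x * trig_basis l x\<bar> \<le> sqrt 2 * sqrt 2" for k l x
    unfolding abs_mult by (intro mult_mono abs_trig_basis_le) auto
  then have "(\<integral>z. torus_basis p z * torus_basis q z \<partial>torus_measure)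
      = (\<integral>x. trig_basis (fst p) x * trig_basis (fst q) x \<partial>circle_measure)
        * (\<integral>y. trig_basis (snd p) y * trig_basis (snd q) y \<partial>circle_measure)"
    unfolding torus_basis_def mult_ac[of "trig_basis _ (snd _)"]
    by (subst integral_torus_tensor[symmetric, where Bf=2 and Bg=2]) (auto simp: mult_ac)
  then show ?thesis
    by (simp add: trig_basis_orthonormal prod_eq_iff)
qed

lemma periodic_C1_test_torus_basis:
  "periodic_C1_test (torus_basis (k, l))
     (\<lambda>z. - of_int k * torus_basis (- k, l) z) (\<lambda>z. - of_int l * torus_basis (k, - l) z)"
  unfolding periodic_C1_test_def
proof (intro conjI allI)
  fix z :: "real \<times> real"
  have "((\<lambda>z. trig_basis k (fst z) * trig_basis l (snd z)) has_derivative
      (\<lambda>h. trig_basis k (fst z) * (- of_int l * trig_basis (- l) (snd z) * snd h)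
         + - of_int k * trig_basis (- k) (fst z) * fst h * trig_basis l (snd z))) (at z)"
    by (intro has_derivative_mult has_derivative_compose[of fst _ _ _ "trig_basis _"]
        has_derivative_compose[of snd _ _ _ "trig_basis _"] has_derivative_fst has_derivative_snd
        has_derivative_ident has_field_derivative_imp_has_derivative[OF trig_basis_has_derivative])
  then show "(torus_basis (k, l) has_derivative (\<lambda>h. fst h * (- of_int k * torus_basis (- k, l) z)
      + snd h * (- of_int l * torus_basis (k, - l) z))) (at z)"
    unfolding torus_basis_def[abs_def] fst_conv snd_conv
    by (rule has_derivative_eq_rhs) (auto simp: algebra_simps)
qed (auto simp: torus_basis_def trig_basis_periodic
    intro!: continuous_intros continuous_on_compose2[OF continuous_on_trig_basis])

definition torus_coeff :: "(real \<times> real \<Rightarrow> real) \<Rightarrow> int \<times> int \<Rightarrow> real" where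
  "torus_coeff f q = (\<integral>z. f z * torus_basis q z \<partial>torus_measure)"

lemma torus_coeff_weak_gradient:
  assumes "H1_weak_gradient u g1 g2"
  shows "torus_coeff g1 (k, l) = of_int k * torus_coeff u (- k, l)"
    and "torus_coeff g2 (k, l) = of_int l * torus_coeff u (k, - l)"
proof -
  have "(\<integral>z. u z * (- of_int k * torus_basis (- k, l) z) \<partial>torus_measure) = - torus_coeff g1 (k, l)"
    and "(\<integral>z. u z * (- of_int l * torus_basis (k, - l) z) \<partial>torus_measure) = - torus_coeff g2 (k, l)"
    using assms periodic_C1_test_torus_basis[of k l]
    unfolding H1_weak_gradient_def torus_coeff_def by blast+
  then show "torus_coeff g1 (k, l) = of_int k * torus_coeff u (- k, l)"
    and "torus_coeff g2 (k, l) = of_int l * torus_coeff u (k, - l)"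
    by (simp_all add: torus_coeff_def mult.left_commute)
qed

definition square_integrable :: "'a measure \<Rightarrow> ('a \<Rightarrow> real) \<Rightarrow> bool" where
  "square_integrable M f \<longleftrightarrow> f \<in> borel_measurable M \<and> integrable M (\<lambda>x. (f x)\<^sup>2)"

lemma square_integrable_torus_iff: "square_integrable torus_measure f \<longleftrightarrow> L2_torus f"
  by (simp add: square_integrable_def L2_torus_def)

lemma integrable_mult_square_integrable:
  assumes "square_integrable M f" "square_integrable M g"
  shows "integrable M (\<lambda>x. f x * g x)"
proof (rule Bochner_Integration.integrable_bound[of _ "\<lambda>x. (f x)\<^sup>2 + (g x)\<^sup>2"])
  have "\<bar>a * b\<bar> \<le> a\<^sup>2 + b\<^sup>2" for a b :: real
  proof -
    have "2 * (\<bar>a\<bar> * \<bar>b\<bar>) \<le> a\<^sup>2 + b\<^sup>2"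
      using sum_squares_bound[of "\<bar>a\<bar>" "\<bar>b\<bar>"] by (simp add: mult.assoc)
    moreover have "0 \<le> \<bar>a\<bar> * \<bar>b\<bar>"
      by simp
    ultimately show ?thesis
      unfolding abs_mult by linarith
  qed
  then show "AE x in M. norm (f x * g x) \<le> norm ((f x)\<^sup>2 + (g x)\<^sup>2)"
    by simp
qed (use assms in \<open>auto simp: square_integrable_def\<close>)

lemma square_integrable_add:
  assumes "square_integrable M f" "square_integrable M g"
  shows "square_integrable M (\<lambda>x. f x + g x)"
  using assms integrable_mult_square_integrable[OF assms]
  by (auto simp: square_integrable_def power2_sum mult.assoc)

lemma square_integrable_scale: "square_integrable M f \<Longrightarrow> square_integrable M (\<lambda>x. c * f x)"
  by (auto simp: square_integrable_def power_mult_distrib)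

lemma square_integrable_diff:
  "square_integrable M f \<Longrightarrow> square_integrable M g \<Longrightarrow> square_integrable M (\<lambda>x. f x - g x)"
  using square_integrable_add[of M f "\<lambda>x. (- 1) * g x"] square_integrable_scale[of M g "- 1"]
  by simp

lemma (in finite_measure) square_integrable_bounded:
  fixes B :: real
  assumes "f \<in> borel_measurable M" "\<And>x. x \<in> space M \<Longrightarrow> \<bar>f x\<bar> \<le> B"
  shows "square_integrable M f"
  unfolding square_integrable_def
proof
  have "(f x)\<^sup>2 \<le> B\<^sup>2" if "x \<in> space M" for x
    using assms(2)[OF that] by (metis abs_ge_zero power2_abs power_mono)
  then show "integrable M (\<lambda>x. (f x)\<^sup>2)"
    using assms(1) by (intro integrable_const_bound[where B="B\<^sup>2"]) auto
qed fact

lemma (in finite_measure) integrable_square_integrable: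
  assumes "square_integrable M f"
  shows "integrable M f"
proof (rule Bochner_Integration.integrable_bound[of _ "\<lambda>x. 1 + (f x)\<^sup>2"])
  have "\<bar>a\<bar> \<le> 1 + a\<^sup>2" for a :: real
    using sum_squares_bound[of 1 "\<bar>a\<bar>"] abs_ge_zero[of a] by simp
  then show "AE x in M. norm (f x) \<le> norm (1 + (f x)\<^sup>2)"
    by simp
  show "integrable M (\<lambda>x. 1 + (f x)\<^sup>2)"
    using assms by (simp add: square_integrable_def)
qed (use assms in \<open>simp add: square_integrable_def\<close>)

lemma integral_square_diff_le:
  assumes "square_integrable M f" "square_integrable M g" "square_integrable M h"
  shows "(\<integral>x. (f x - h x)\<^sup>2 \<partial>M) \<le> 2 * (\<integral>x. (f x - g x)\<^sup>2 \<partial>M) + 2 * (\<integral>x. (g x - h x)\<^sup>2 \<partial>M)"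
proof -
  have "(a - c)\<^sup>2 \<le> 2 * (a - b)\<^sup>2 + 2 * (b - c)\<^sup>2" for a b c :: real
    using sum_squares_bound[of "a - b" "b - c"] by (simp add: power2_eq_square algebra_simps)
  moreover have int: "integrable M (\<lambda>x. (f x - g x)\<^sup>2)" "integrable M (\<lambda>x. (g x - h x)\<^sup>2)"
    "integrable M (\<lambda>x. (f x - h x)\<^sup>2)"
    using square_integrable_diff[OF assms(1,2)] square_integrable_diff[OF assms(2,3)]
      square_integrable_diff[OF assms(1,3)]
    by (simp_all add: square_integrable_def)
  ultimately have "(\<integral>x. (f x - h x)\<^sup>2 \<partial>M) \<le> (\<integral>x. 2 * (f x - g x)\<^sup>2 + 2 * (g x - h x)\<^sup>2 \<partial>M)"
    by (intro integral_mono) auto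
  also have "\<dots> = 2 * (\<integral>x. (f x - g x)\<^sup>2 \<partial>M) + 2 * (\<integral>x. (g x - h x)\<^sup>2 \<partial>M)"
    using int by simp
  finally show ?thesis .
qed

lemma integral_square_diff_orthonormal_sum:
  assumes u: "square_integrable M u" and "finite Q"
    and \<phi>: "\<And>i. i \<in> Q \<Longrightarrow> square_integrable M (\<phi> i)"
    and orth: "\<And>i j. i \<in> Q \<Longrightarrow> j \<in> Q \<Longrightarrow> (\<integral>x. \<phi> i x * \<phi> j x \<partial>M) = (if i = j then 1 else 0)"
  defines "c i \<equiv> \<integral>x. u x * \<phi> i x \<partial>M"
  shows "(\<integral>x. (u x - (\<Sum>i\<in>Q. d i * \<phi> i x))\<^sup>2 \<partial>M)
    = (\<integral>x. (u x)\<^sup>2 \<partial>M) - (\<Sum>i\<in>Q. (c i)\<^sup>2) + (\<Sum>i\<in>Q. (d i - c i)\<^sup>2)"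
proof -
  have int_u\<phi>: "integrable M (\<lambda>x. u x * \<phi> i x)" if "i \<in> Q" for i
    using integrable_mult_square_integrable[OF u \<phi>[OF that]] .
  have int_\<phi>\<phi>: "integrable M (\<lambda>x. \<phi> i x * \<phi> j x)" if "i \<in> Q" "j \<in> Q" for i j
    using integrable_mult_square_integrable[OF \<phi>[OF that(1)] \<phi>[OF that(2)]] .
  have "(\<integral>x. (u x - (\<Sum>i\<in>Q. d i * \<phi> i x))\<^sup>2 \<partial>M)
      = (\<integral>x. (u x)\<^sup>2 - 2 * (\<Sum>i\<in>Q. d i * (u x * \<phi> i x))
             + (\<Sum>i\<in>Q. \<Sum>j\<in>Q. d i * d j * (\<phi> i x * \<phi> j x)) \<partial>M)"
    by (simp add: power2_diff power2_eq_square sum_distrib_left sum_distrib_right sum_product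
        algebra_simps)
  also have "\<dots> = (\<integral>x. (u x)\<^sup>2 \<partial>M) - 2 * (\<Sum>i\<in>Q. d i * c i)
      + (\<Sum>i\<in>Q. \<Sum>j\<in>Q. d i * d j * (if i = j then 1 else 0))"
    using u int_u\<phi> int_\<phi>\<phi> orth
    by (simp add: square_integrable_def c_def integrable_sum integral_sum)
  also have "(\<Sum>i\<in>Q. \<Sum>j\<in>Q. d i * d j * (if i = j then 1 else 0)) = (\<Sum>i\<in>Q. (d i)\<^sup>2)"
    using \<open>finite Q\<close> by (simp add: power2_eq_square if_distrib sum.delta cong: if_cong)
  finally show ?thesis
    by (simp add: power2_diff sum.distrib sum_subtractf sum_distrib_left mult.assoc)
qed

corollary Bessel_inequality:
  assumes "square_integrable M u" "finite Q" "\<And>i. i \<in> Q \<Longrightarrow> square_integrable M (\<phi> i)"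
    and "\<And>i j. i \<in> Q \<Longrightarrow> j \<in> Q \<Longrightarrow> (\<integral>x. \<phi> i x * \<phi> j x \<partial>M) = (if i = j then 1 else 0)"
  shows "(\<Sum>i\<in>Q. (\<integral>x. u x * \<phi> i x \<partial>M)\<^sup>2) \<le> (\<integral>x. (u x)\<^sup>2 \<partial>M)"
proof -
  let ?c = "\<lambda>i. \<integral>x. u x * \<phi> i x \<partial>M"
  have "0 \<le> (\<integral>x. (u x - (\<Sum>i\<in>Q. ?c i * \<phi> i x))\<^sup>2 \<partial>M)"
    by (rule Bochner_Integration.integral_nonneg) simp
  then show ?thesis
    using integral_square_diff_orthonormal_sum[OF assms, of ?c] by simp
qed

corollary orthonormal_best_approximation:
  assumes "square_integrable M u" "finite Q" "\<And>i. i \<in> Q \<Longrightarrow> square_integrable M (\<phi> i)"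
    and "\<And>i j. i \<in> Q \<Longrightarrow> j \<in> Q \<Longrightarrow> (\<integral>x. \<phi> i x * \<phi> j x \<partial>M) = (if i = j then 1 else 0)"
  shows "(\<integral>x. (u x)\<^sup>2 \<partial>M) - (\<Sum>i\<in>Q. (\<integral>x. u x * \<phi> i x \<partial>M)\<^sup>2)
    \<le> (\<integral>x. (u x - (\<Sum>i\<in>Q. d i * \<phi> i x))\<^sup>2 \<partial>M)"
proof -
  have "0 \<le> (\<Sum>i\<in>Q. (d i - (\<integral>x. u x * \<phi> i x \<partial>M))\<^sup>2)"
    by (rule sum_nonneg) simp
  then show ?thesis
    using integral_square_diff_orthonormal_sum[OF assms, of d] by simp
qed

section \<open>Approximation in mean square\<close>

definition L2_approximable :: "'a measure \<Rightarrow> ('a \<Rightarrow> real) set \<Rightarrow> ('a \<Rightarrow> real) \<Rightarrow> bool" where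
  "L2_approximable M T f \<longleftrightarrow>
     square_integrable M f \<and> (\<forall>\<epsilon>>0. \<exists>t\<in>T. (\<integral>x. (f x - t x)\<^sup>2 \<partial>M) < \<epsilon>)"

lemma L2_approximable_cong:
  assumes "\<And>x. x \<in> space M \<Longrightarrow> f x = g x" "L2_approximable M T f"
  shows "L2_approximable M T g"
proof -
  have "(\<integral>x. (f x - t x)\<^sup>2 \<partial>M) = (\<integral>x. (g x - t x)\<^sup>2 \<partial>M)" for t
    using assms(1) by (intro Bochner_Integration.integral_cong) auto
  moreover have "f \<in> borel_measurable M \<longleftrightarrow> g \<in> borel_measurable M"
    using assms(1) by (rule measurable_cong)
  moreover have "integrable M (\<lambda>x. (f x)\<^sup>2) \<longleftrightarrow> integrable M (\<lambda>x. (g x)\<^sup>2)"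
    using assms(1) by (intro Bochner_Integration.integrable_cong) auto
  ultimately show ?thesis
    using assms(2) by (simp add: L2_approximable_def square_integrable_def)
qed

lemma square_integrable_simple_approximation:
  assumes f: "square_integrable M f"
  obtains F where "\<And>i. simple_function M (F i)" "(\<lambda>i. \<integral>x. (f x - F i x)\<^sup>2 \<partial>M) \<longlonglongrightarrow> 0"
proof -
  have f_meas [measurable]: "f \<in> borel_measurable M" and int: "integrable M (\<lambda>x. (f x)\<^sup>2)"
    using f unfolding square_integrable_def by blast+
  obtain F where F': "\<forall>i. simple_function M (F i)"
    and lim': "\<forall>x\<in>space M. (\<lambda>i. F i x) \<longlonglongrightarrow> f x"
    and bound': "\<forall>i. \<forall>x\<in>space M. dist (F i x) 0 \<le> 2 * dist (f x) 0"
    using borel_measurable_implies_sequence_metric[OF f_meas, of 0] by blast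
  have F: "simple_function M (F i)" for i
    using F' by blast
  then have [measurable]: "F i \<in> borel_measurable M" for i
    by (rule borel_measurable_simple_function)
  have "(\<lambda>i. \<integral>x. (f x - F i x)\<^sup>2 \<partial>M) \<longlonglongrightarrow> (\<integral>x. 0 \<partial>M)"
  proof (rule integral_dominated_convergence[where w="\<lambda>x. 9 * (f x)\<^sup>2"])
    show "AE x in M. (\<lambda>i. (f x - F i x)\<^sup>2) \<longlonglongrightarrow> 0"
    proof (rule AE_I2)
      fix x assume "x \<in> space M"
      then have "(\<lambda>i. (f x - F i x)\<^sup>2) \<longlonglongrightarrow> (f x - f x)\<^sup>2"
        using lim' by (intro tendsto_intros) auto
      then show "(\<lambda>i. (f x - F i x)\<^sup>2) \<longlonglongrightarrow> 0"
        by simp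
    qed
    show "AE x in M. norm ((f x - F i x)\<^sup>2) \<le> 9 * (f x)\<^sup>2" for i
    proof (rule AE_I2)
      fix x assume "x \<in> space M"
      then have "\<bar>F i x\<bar> \<le> 2 * \<bar>f x\<bar>"
        using bound' by (simp add: dist_real_def)
      then have "\<bar>f x - F i x\<bar> \<le> \<bar>3 * f x\<bar>"
        by linarith
      then show "norm ((f x - F i x)\<^sup>2) \<le> 9 * (f x)\<^sup>2"
        by (simp add: abs_le_square_iff power_mult_distrib)
    qed
  qed (use int in simp_all)
  then have "(\<lambda>i. \<integral>x. (f x - F i x)\<^sup>2 \<partial>M) \<longlonglongrightarrow> 0"
    by simp
  with F show ?thesis
    by (rule that)
qed

locale L2_approximation = finite_measure M for M :: "'a measure" +
  fixes T :: "('a \<Rightarrow> real) set"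
  assumes square_integrable_T: "t \<in> T \<Longrightarrow> square_integrable M t"
    and const_in_T: "(\<lambda>x. c) \<in> T"
    and add_in_T: "s \<in> T \<Longrightarrow> t \<in> T \<Longrightarrow> (\<lambda>x. s x + t x) \<in> T"
    and scale_in_T: "t \<in> T \<Longrightarrow> (\<lambda>x. c * t x) \<in> T"
begin

lemma approximable_T: "t \<in> T \<Longrightarrow> L2_approximable M T t"
  using square_integrable_T by (auto simp: L2_approximable_def intro!: bexI[of _ t])

lemma approximable_add:
  assumes f: "L2_approximable M T f" and g: "L2_approximable M T g"
  shows "L2_approximable M T (\<lambda>x. f x + g x)"
  unfolding L2_approximable_def
proof (intro conjI allI impI)
  have sf: "square_integrable M f" and sg: "square_integrable M g"
    using f g by (simp_all add: L2_approximable_def)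
  then show "square_integrable M (\<lambda>x. f x + g x)"
    by (rule square_integrable_add)
  fix \<epsilon> :: real assume "\<epsilon> > 0"
  then have "\<epsilon> / 4 > 0"
    by simp
  then obtain s t where "s \<in> T" "t \<in> T"
    and s: "(\<integral>x. (f x - s x)\<^sup>2 \<partial>M) < \<epsilon> / 4" and t: "(\<integral>x. (g x - t x)\<^sup>2 \<partial>M) < \<epsilon> / 4"
    using f g unfolding L2_approximable_def by blast
  have ss: "square_integrable M s" "square_integrable M t"
    using \<open>s \<in> T\<close> \<open>t \<in> T\<close> by (simp_all add: square_integrable_T)
  have "(\<integral>x. (f x + g x - (s x + t x))\<^sup>2 \<partial>M)
      \<le> 2 * (\<integral>x. (f x + g x - (s x + g x))\<^sup>2 \<partial>M) + 2 * (\<integral>x. (s x + g x - (s x + t x))\<^sup>2 \<partial>M)"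
    using sf sg ss by (intro integral_square_diff_le square_integrable_add)
  also have "\<dots> < \<epsilon>"
    using s t by simp
  finally show "\<exists>u\<in>T. (\<integral>x. (f x + g x - u x)\<^sup>2 \<partial>M) < \<epsilon>"
    using add_in_T[OF \<open>s \<in> T\<close> \<open>t \<in> T\<close>] by (intro bexI[of _ "\<lambda>x. s x + t x"]) simp_all
qed

lemma approximable_scale:
  assumes f: "L2_approximable M T f"
  shows "L2_approximable M T (\<lambda>x. c * f x)"
  unfolding L2_approximable_def
proof (intro conjI allI impI)
  show "square_integrable M (\<lambda>x. c * f x)"
    using f by (simp add: L2_approximable_def square_integrable_scale)
  fix \<epsilon> :: real assume "\<epsilon> > 0"
  show "\<exists>t\<in>T. (\<integral>x. (c * f x - t x)\<^sup>2 \<partial>M) < \<epsilon>"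
  proof (cases "c = 0")
    case True
    then show ?thesis
      using const_in_T[of 0] \<open>\<epsilon> > 0\<close> by force
  next
    case False
    with \<open>\<epsilon> > 0\<close> have "\<epsilon> / c\<^sup>2 > 0"
      by simp
    then obtain t where "t \<in> T" and t: "(\<integral>x. (f x - t x)\<^sup>2 \<partial>M) < \<epsilon> / c\<^sup>2"
      using f unfolding L2_approximable_def by blast
    have "(\<integral>x. (c * f x - c * t x)\<^sup>2 \<partial>M) = c\<^sup>2 * (\<integral>x. (f x - t x)\<^sup>2 \<partial>M)"
      by (simp add: power_mult_distrib right_diff_distrib[symmetric])
    also have "\<dots> < \<epsilon>"
      using t False by (simp add: field_simps)
    finally show ?thesis
      using scale_in_T[OF \<open>t \<in> T\<close>] by (intro bexI[of _ "\<lambda>x. c * t x"]) simp_all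
  qed
qed

lemma approximable_sum:
  "finite Q \<Longrightarrow> (\<And>i. i \<in> Q \<Longrightarrow> L2_approximable M T (f i)) \<Longrightarrow>
    L2_approximable M T (\<lambda>x. \<Sum>i\<in>Q. f i x)"
proof (induction Q rule: finite_induct)
  case empty
  then show ?case
    using approximable_T[OF const_in_T[of 0]] by simp
next
  case (insert i Q)
  then show ?case
    by (simp add: approximable_add)
qed

lemma approximable_closed:
  assumes f: "square_integrable M f"
    and approx: "\<And>\<epsilon>. \<epsilon> > 0 \<Longrightarrow> \<exists>g. L2_approximable M T g \<and> (\<integral>x. (f x - g x)\<^sup>2 \<partial>M) < \<epsilon>"
  shows "L2_approximable M T f"
  unfolding L2_approximable_def
proof (intro conjI allI impI f)
  fix \<epsilon> :: real assume "\<epsilon> > 0"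
  then obtain g where g: "L2_approximable M T g" and fg: "(\<integral>x. (f x - g x)\<^sup>2 \<partial>M) < \<epsilon> / 4"
    using approx[of "\<epsilon> / 4"] by auto
  then obtain t where "t \<in> T" and gt: "(\<integral>x. (g x - t x)\<^sup>2 \<partial>M) < \<epsilon> / 4"
    using \<open>\<epsilon> > 0\<close> unfolding L2_approximable_def by (meson divide_pos_pos zero_less_numeral)
  have "(\<integral>x. (f x - t x)\<^sup>2 \<partial>M) \<le> 2 * (\<integral>x. (f x - g x)\<^sup>2 \<partial>M) + 2 * (\<integral>x. (g x - t x)\<^sup>2 \<partial>M)"
    using f g square_integrable_T[OF \<open>t \<in> T\<close>]
    by (intro integral_square_diff_le) (auto simp: L2_approximable_def)
  also have "\<dots> < \<epsilon>"
    using fg gt by simp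
  finally show "\<exists>t\<in>T. (\<integral>x. (f x - t x)\<^sup>2 \<partial>M) < \<epsilon>"
    using \<open>t \<in> T\<close> by blast
qed

lemma square_integrable_indicator: "A \<in> sets M \<Longrightarrow> square_integrable M (indicator A)"
  by (rule square_integrable_bounded[where B=1]) (auto split: split_indicator)

lemma approximable_indicator_Union:
  assumes "disjoint_family A" "range A \<subseteq> sets M" "\<And>i. L2_approximable M T (indicator (A i))"
  shows "L2_approximable M T (indicator (\<Union>i::nat. A i))"
proof (rule approximable_closed)
  define U where "U n = (\<Union>i<n. A i)" for n
  have [measurable]: "A i \<in> sets M" "U n \<in> sets M" "(\<Union>i. A i) \<in> sets M" for i n
    using assms(2) by (auto simp: U_def)
  show "square_integrable M (indicator (\<Union>i. A i))"
    by (rule square_integrable_indicator) simp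
  fix \<epsilon> :: real assume "\<epsilon> > 0"
  have "(\<lambda>n. measure M (U n)) \<longlonglongrightarrow> measure M (\<Union>n. U n)"
    by (intro finite_Lim_measure_incseq) (auto simp: incseq_def U_def intro: order_less_le_trans)
  moreover have "(\<Union>n. U n) = (\<Union>i. A i)"
    by (auto simp: U_def)
  ultimately obtain N where "\<forall>n\<ge>N. norm (measure M (U n) - measure M (\<Union>i. A i)) < \<epsilon>"
    using LIMSEQ_D \<open>\<epsilon> > 0\<close> by metis
  then have n: "measure M (\<Union>i. A i) - measure M (U N) < \<epsilon>"
    by auto
  have "indicator (U N) = (\<lambda>x. \<Sum>i<N. indicator (A i) x :: real)"
    using assms(1) unfolding U_def
    by (intro ext indicator_UN_disjoint) (auto simp: disjoint_family_on_def)
  then have approx_U: "L2_approximable M T (indicator (U N))"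
    using assms(3) by (simp add: approximable_sum)
  have "U N \<subseteq> (\<Union>i. A i)"
    by (auto simp: U_def)
  then have "(\<integral>x. (indicator (\<Union>i. A i) x - indicator (U N) x :: real)\<^sup>2 \<partial>M)
      = (\<integral>x. indicator ((\<Union>i. A i) - U N) x \<partial>M)"
    by (intro Bochner_Integration.integral_cong) (auto split: split_indicator)
  also have "\<dots> = measure M ((\<Union>i. A i) - U N)"
    by simp
  also have "\<dots> < \<epsilon>"
    using n \<open>U N \<subseteq> (\<Union>i. A i)\<close> by (simp add: finite_measure_Diff)
  finally show "\<exists>g. L2_approximable M T g \<and> (\<integral>x. (indicator (\<Union>i. A i) x - g x)\<^sup>2 \<partial>M) < \<epsilon>"
    using approx_U by blast
qed

lemma approximable_indicator_sigma_sets: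
  assumes sets: "sets M = sigma_sets (space M) G" and "Int_stable G" "G \<subseteq> Pow (space M)"
    and G: "\<And>A. A \<in> G \<Longrightarrow> L2_approximable M T (indicator A)"
    and "A \<in> sets M"
  shows "L2_approximable M T (indicator A)"
  using \<open>Int_stable G\<close> \<open>G \<subseteq> Pow (space M)\<close> \<open>A \<in> sets M\<close>[unfolded sets]
proof (induction rule: sigma_sets_induct_disjoint)
  case (basic A)
  then show ?case
    by (rule G)
next
  case empty
  then show ?case
    using approximable_T[OF const_in_T[of 0]] by simp
next
  case (compl A)
  have "L2_approximable M T (\<lambda>x. 1 + (- 1) * indicator A x)"
    by (rule approximable_add[OF approximable_T[OF const_in_T] approximable_scale[OF compl.IH]])
  then show ?case
    by (rule L2_approximable_cong[rotated]) (auto split: split_indicator)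
next
  case (union A)
  then show ?case
    using sets by (intro approximable_indicator_Union) auto
qed

lemma approximable_simple_function:
  assumes indicator: "\<And>A. A \<in> sets M \<Longrightarrow> L2_approximable M T (indicator A)"
    and F: "simple_function M F"
  shows "L2_approximable M T F"
proof -
  have scaled: "L2_approximable M T (\<lambda>x. y * indicator (F -` {y} \<inter> space M) x)" for y
    by (rule approximable_scale[OF indicator]) (rule simple_functionD(2)[OF F])
  have "L2_approximable M T (\<lambda>x. \<Sum>y\<in>F ` space M. y * indicator (F -` {y} \<inter> space M) x)"
    by (rule approximable_sum[of "F ` space M" "\<lambda>y x. y * indicator (F -` {y} \<inter> space M) x",
          OF simple_functionD(1)[OF F] scaled])
  then show ?thesis
  proof (rule L2_approximable_cong[rotated])
    show "(\<Sum>y\<in>F ` space M. y * indicator (F -` {y} \<inter> space M) x) = F x" if "x \<in> space M" for x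
      using simple_function_indicator_representation_banach[OF F that]
      by (simp only: real_scaleR_def mult.commute)
  qed
qed

theorem approximable_square_integrable:
  assumes sets: "sets M = sigma_sets (space M) G" and "Int_stable G" "G \<subseteq> Pow (space M)"
    and G: "\<And>A. A \<in> G \<Longrightarrow> L2_approximable M T (indicator A)"
    and f: "square_integrable M f"
  shows "L2_approximable M T f"
proof (rule approximable_closed[OF f])
  have indicator: "L2_approximable M T (indicator A)" if "A \<in> sets M" for A
    using approximable_indicator_sigma_sets[OF assms(1-4) that] .
  obtain F where F: "\<And>i. simple_function M (F i)"
    and conv: "(\<lambda>i. \<integral>x. (f x - F i x)\<^sup>2 \<partial>M) \<longlonglongrightarrow> 0"
    using square_integrable_simple_approximation[OF f] by blast
  show "\<exists>g. L2_approximable M T g \<and> (\<integral>x. (f x - g x)\<^sup>2 \<partial>M) < \<epsilon>" if \<epsilon>: "\<epsilon> > 0" for \<epsilon>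
  proof -
    obtain N where "\<forall>i\<ge>N. norm ((\<integral>x. (f x - F i x)\<^sup>2 \<partial>M) - 0) < \<epsilon>"
      using LIMSEQ_D[OF conv \<epsilon>] by blast
    then have "(\<integral>x. (f x - F N x)\<^sup>2 \<partial>M) < \<epsilon>"
      by auto
    then show ?thesis
      using approximable_simple_function[OF indicator F] by blast
  qed
qed

end

section \<open>Trigonometric polynomials\<close>

definition fun_span :: "('i \<Rightarrow> 'a \<Rightarrow> real) \<Rightarrow> ('a \<Rightarrow> real) set" where
  "fun_span \<phi> = {f. \<exists>Q c. finite Q \<and> f = (\<lambda>x. \<Sum>i\<in>Q. c i * \<phi> i x)}"

lemma fun_spanI: "finite Q \<Longrightarrow> (\<lambda>x. \<Sum>i\<in>Q. c i * \<phi> i x) \<in> fun_span \<phi>"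
  unfolding fun_span_def by blast

lemma fun_spanE:
  assumes "f \<in> fun_span \<phi>"
  obtains Q c where "finite Q" "f = (\<lambda>x. \<Sum>i\<in>Q. c i * \<phi> i x)"
  using assms unfolding fun_span_def by blast

lemma fun_span_basis: "\<phi> i \<in> fun_span \<phi>"
  using fun_spanI[of "{i}" "\<lambda>_. 1" \<phi>] by simp

lemma fun_span_zero: "(\<lambda>x. 0) \<in> fun_span \<phi>"
  using fun_spanI[of "{}" _ \<phi>] by simp

lemma fun_span_scale:
  assumes "f \<in> fun_span \<phi>"
  shows "(\<lambda>x. a * f x) \<in> fun_span \<phi>"
proof -
  obtain Q c where "finite Q" "f = (\<lambda>x. \<Sum>i\<in>Q. c i * \<phi> i x)"
    using assms by (elim fun_spanE)
  then show ?thesis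
    using fun_spanI[of Q "\<lambda>i. a * c i" \<phi>] by (simp add: sum_distrib_left mult.assoc)
qed

lemma fun_span_add:
  assumes "f \<in> fun_span \<phi>" "g \<in> fun_span \<phi>"
  shows "(\<lambda>x. f x + g x) \<in> fun_span \<phi>"
proof -
  obtain Q c R d where "finite Q" "finite R"
    and f: "f = (\<lambda>x. \<Sum>i\<in>Q. c i * \<phi> i x)" and g: "g = (\<lambda>x. \<Sum>i\<in>R. d i * \<phi> i x)"
    using assms by (elim fun_spanE)
  have restrict: "(\<Sum>i\<in>Q \<union> R. (if i \<in> S then e i else 0) * \<phi> i x) = (\<Sum>i\<in>S. e i * \<phi> i x)"
    if "S \<subseteq> Q \<union> R" for S e x
  proof -
    have "(\<Sum>i\<in>Q \<union> R. (if i \<in> S then e i else 0) * \<phi> i x)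
        = (\<Sum>i\<in>Q \<union> R. if i \<in> S then e i * \<phi> i x else 0)"
      by (rule sum.cong) auto
    also have "\<dots> = (\<Sum>i\<in>(Q \<union> R) \<inter> S. e i * \<phi> i x)"
      using \<open>finite Q\<close> \<open>finite R\<close> by (simp add: sum.inter_restrict)
    finally show ?thesis
      using that by (simp add: Int_absorb1)
  qed
  have "(\<lambda>x. f x + g x)
      = (\<lambda>x. \<Sum>i\<in>Q \<union> R. ((if i \<in> Q then c i else 0) + (if i \<in> R then d i else 0)) * \<phi> i x)"
    by (simp add: f g distrib_right sum.distrib restrict)
  then show ?thesis
    using \<open>finite Q\<close> \<open>finite R\<close> by (simp add: fun_spanI)
qed

lemma fun_span_sum:
  "finite A \<Longrightarrow> (\<And>a. a \<in> A \<Longrightarrow> f a \<in> fun_span \<phi>) \<Longrightarrow> (\<lambda>x. \<Sum>a\<in>A. f a x) \<in> fun_span \<phi>"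
  by (induction A rule: finite_induct) (simp_all add: fun_span_zero fun_span_add)

lemma fun_span_mult:
  assumes basis_mult: "\<And>i j. (\<lambda>x. \<phi> i x * \<phi> j x) \<in> fun_span \<phi>"
    and "f \<in> fun_span \<phi>" "g \<in> fun_span \<phi>"
  shows "(\<lambda>x. f x * g x) \<in> fun_span \<phi>"
proof -
  obtain Q c R d where "finite Q" "finite R"
    and f: "f = (\<lambda>x. \<Sum>i\<in>Q. c i * \<phi> i x)" and g: "g = (\<lambda>x. \<Sum>i\<in>R. d i * \<phi> i x)"
    using assms(2,3) by (elim fun_spanE)
  have "(\<lambda>x. f x * g x) = (\<lambda>x. \<Sum>i\<in>Q. \<Sum>j\<in>R. c i * d j * (\<phi> i x * \<phi> j x))"
    by (simp add: f g sum_product mult_ac)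
  also have "\<dots> \<in> fun_span \<phi>"
    using \<open>finite Q\<close> \<open>finite R\<close> basis_mult
    by (intro fun_span_sum fun_span_scale) simp_all
  finally show ?thesis .
qed

lemma fun_span_bounded:
  fixes B :: real
  assumes "\<And>i x. \<bar>\<phi> i x\<bar> \<le> B" "f \<in> fun_span \<phi>"
  obtains C where "\<And>x. \<bar>f x\<bar> \<le> C"
proof -
  obtain Q c where f: "f = (\<lambda>x. \<Sum>i\<in>Q. c i * \<phi> i x)"
    using assms(2) by (elim fun_spanE)
  have "\<bar>f x\<bar> \<le> (\<Sum>i\<in>Q. \<bar>c i\<bar> * B)" for x
    unfolding f by (rule order_trans[OF sum_abs sum_mono]) (simp add: abs_mult assms(1) mult_left_mono)
  then show ?thesis
    by (rule that)
qed

lemma fun_span_continuous_on: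
  "(\<And>i. continuous_on A (\<phi> i)) \<Longrightarrow> f \<in> fun_span \<phi> \<Longrightarrow> continuous_on A f"
  by (elim fun_spanE) (auto intro!: continuous_intros)

abbreviation trig_poly :: "(real \<Rightarrow> real) set" where
  "trig_poly \<equiv> fun_span trig_basis"

lemma cos_in_trig_poly: "(\<lambda>x. cos (of_int j * x)) \<in> trig_poly"
proof -
  have "(\<lambda>x. cos (of_int j * x)) = (\<lambda>x. (if j = 0 then 1 else 1 / sqrt 2) * trig_basis \<bar>j\<bar> x)"
    by (auto simp: trig_basis_def abs_if)
  then show ?thesis
    by (simp add: fun_span_scale fun_span_basis)
qed

lemma sin_in_trig_poly: "(\<lambda>x. sin (of_int j * x)) \<in> trig_poly"
proof -
  have "(\<lambda>x. sin (of_int j * x)) = (\<lambda>x. (if j = 0 then 0 else sgn j / sqrt 2) * trig_basis (- \<bar>j\<bar>) x)"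
    by (auto simp: trig_basis_def abs_if)
  then show ?thesis
    by (simp add: fun_span_scale fun_span_basis)
qed

lemma trig_basis_mult_in_trig_poly: "(\<lambda>x. trig_basis k x * trig_basis l x) \<in> trig_poly"
proof -
  have combination: "(\<lambda>x. a * u x + b * v x) \<in> trig_poly" if "u \<in> trig_poly" "v \<in> trig_poly" for a b u v
    using that by (intro fun_span_add fun_span_scale)
  show ?thesis
  proof (cases "k = 0 \<or> l = 0")
    case True
    then show ?thesis
      using fun_span_basis[of trig_basis k] fun_span_basis[of trig_basis l] by auto
  next
    case False
    then show ?thesis
    proof (cases k rule: trig_basis_cases; cases l rule: trig_basis_cases)
      assume k: "trig_basis k = (\<lambda>x. sqrt 2 * cos (of_int k * x))"
        and l: "trig_basis l = (\<lambda>x. sqrt 2 * cos (of_int l * x))"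
      show ?thesis
        using combination[OF cos_in_trig_poly cos_in_trig_poly, of 1 "k - l" 1 "k + l"]
        by (simp add: k l sqrt2_mult_sqrt2 cos_times_cos_int del: of_int_diff of_int_add)
    next
      assume k: "trig_basis k = (\<lambda>x. sqrt 2 * sin (of_int (- k) * x))"
        and l: "trig_basis l = (\<lambda>x. sqrt 2 * sin (of_int (- l) * x))"
      show ?thesis
        using combination[OF cos_in_trig_poly cos_in_trig_poly, of 1 "- k - - l" "- 1" "- k + - l"]
        by (simp add: k l sqrt2_mult_sqrt2 sin_times_sin_int del: of_int_diff of_int_add of_int_minus)
    next
      assume k: "trig_basis k = (\<lambda>x. sqrt 2 * cos (of_int k * x))"
        and l: "trig_basis l = (\<lambda>x. sqrt 2 * sin (of_int (- l) * x))"
      show ?thesis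
        using combination[OF sin_in_trig_poly sin_in_trig_poly, of 1 "- l + k" 1 "- l - k"]
        by (simp add: k l sqrt2_mult_sqrt2 mult.commute[of "cos _"] sin_times_cos_int
            del: of_int_diff of_int_add of_int_minus)
    next
      assume k: "trig_basis k = (\<lambda>x. sqrt 2 * sin (of_int (- k) * x))"
        and l: "trig_basis l = (\<lambda>x. sqrt 2 * cos (of_int l * x))"
      show ?thesis
        using combination[OF sin_in_trig_poly sin_in_trig_poly, of 1 "- k + l" 1 "- k - l"]
        by (simp add: k l sqrt2_mult_sqrt2 sin_times_cos_int del: of_int_diff of_int_add of_int_minus)
    qed simp_all
  qed
qed

lemma trig_poly_mult: "f \<in> trig_poly \<Longrightarrow> g \<in> trig_poly \<Longrightarrow> (\<lambda>x. f x * g x) \<in> trig_poly"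
  by (rule fun_span_mult[OF trig_basis_mult_in_trig_poly])

lemma const_in_trig_poly: "(\<lambda>x. c) \<in> trig_poly"
  using fun_span_scale[OF fun_span_basis[of trig_basis 0], of c] by simp

lemma borel_measurable_trig_poly: "f \<in> trig_poly \<Longrightarrow> f \<in> borel_measurable borel"
  by (rule borel_measurable_continuous_onI[OF fun_span_continuous_on[OF continuous_on_trig_basis]])

lemma trig_poly_of_real_polynomial_function:
  "real_polynomial_function g \<Longrightarrow> (\<lambda>x. g (cis x)) \<in> trig_poly"
proof (induction g rule: real_polynomial_function.induct)
  case (linear g)
  then have lin: "linear g"
    by (rule bounded_linear.linear)
  have gz: "g z = Re z * g 1 + Im z * g \<i>" for z
  proof -
    have "z = Re z *\<^sub>R 1 + Im z *\<^sub>R \<i>"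
      by (simp add: complex_eq_iff)
    then have "g z = g (Re z *\<^sub>R 1 + Im z *\<^sub>R \<i>)"
      by (rule arg_cong)
    then show ?thesis
      by (simp add: linear_add[OF lin] linear_scale[OF lin])
  qed
  have "(\<lambda>x. g (cis x)) = (\<lambda>x. g 1 * cos (of_int 1 * x) + g \<i> * sin (of_int 1 * x))"
  proof
    show "g (cis x) = g 1 * cos (of_int 1 * x) + g \<i> * sin (of_int 1 * x)" for x
      using gz[of "cis x"] by (simp add: mult.commute)
  qed
  moreover have "(\<lambda>x. g 1 * cos (of_int 1 * x) + g \<i> * sin (of_int 1 * x)) \<in> trig_poly"
    by (intro fun_span_add fun_span_scale cos_in_trig_poly sin_in_trig_poly)
  ultimately show ?case
    by simp
next
  case (const c)
  show ?case
    by (rule const_in_trig_poly)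
next
  case (add f g)
  show ?case
    by (rule fun_span_add[OF add.IH])
next
  case (mult f g)
  show ?case
    by (rule trig_poly_mult[OF mult.IH])
qed

lemma continuous_on_sphere_comp_Arg:
  fixes \<tau> :: "real \<Rightarrow> real"
  assumes cont: "continuous_on UNIV \<tau>" and \<delta>: "0 < \<delta>" "\<delta> < pi / 2"
    and vanish: "\<And>x. pi - \<delta> \<le> \<bar>x\<bar> \<Longrightarrow> \<tau> x = 0"
  shows "continuous_on (sphere 0 1) (\<lambda>z. \<tau> (Arg z))"
proof (rule continuous_at_imp_continuous_on, intro ballI)
  have cos_\<delta>: "0 < cos \<delta>" "cos \<delta> < 1"
    using \<delta> cos_monotone_0_pi[of 0 \<delta>] by (auto simp: cos_gt_zero_pi)
  have zero: "\<tau> (Arg w) = 0" if "Re w / cmod w < - cos \<delta>" for w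
  proof -
    have "w \<noteq> 0"
      using that cos_\<delta> by auto
    have "\<not> \<bar>Arg w\<bar> < pi - \<delta>"
    proof
      assume "\<bar>Arg w\<bar> < pi - \<delta>"
      then have "cos (pi - \<delta>) < cos \<bar>Arg w\<bar>"
        using \<delta> by (intro cos_monotone_0_pi) auto
      then show False
        using that cos_Arg[OF \<open>w \<noteq> 0\<close>] by simp
    qed
    then show ?thesis
      by (intro vanish) simp
  qed
  fix z :: complex assume z: "z \<in> sphere 0 1"
  show "isCont (\<lambda>z. \<tau> (Arg z)) z"
  proof (cases "z \<in> \<real>\<^sub>\<le>\<^sub>0")
    case False
    then show ?thesis
      using cont by (intro isCont_o2[OF continuous_at_Arg]) (simp_all add: continuous_on_eq_continuous_at)
  next
    case True
    then have "Re z / cmod z = -1"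
      using z by (auto simp: nonpos_Reals_def complex_eq_iff cmod_def)
    moreover have "((\<lambda>w. Re w / cmod w) \<longlongrightarrow> Re z / cmod z) (at z)"
      using z by (intro tendsto_intros) auto
    ultimately have "eventually (\<lambda>w. Re w / cmod w < - cos \<delta>) (at z)"
      using cos_\<delta> by (intro order_tendstoD(2)) auto
    then have "((\<lambda>w. \<tau> (Arg w)) \<longlongrightarrow> 0) (at z)"
      by (intro tendsto_eventually) (auto elim: eventually_mono intro: zero)
    then show ?thesis
      using zero[of z] \<open>Re z / cmod z = -1\<close> cos_\<delta> by (simp add: isCont_def)
  qed
qed

text \<open>Stone-Weierstrass on the unit circle, pulled back along \<^const>\<open>cis\<close>; the vanishing
  near \<open>\<plusminus>\<pi>\<close> makes \<open>\<tau> \<circ> Arg\<close> continuous across the branch cut.\<close>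

lemma trig_poly_uniform_approximation:
  fixes \<tau> :: "real \<Rightarrow> real"
  assumes "continuous_on UNIV \<tau>" "0 < \<delta>" "\<delta> < pi / 2"
    and vanish: "\<And>x. pi - \<delta> \<le> \<bar>x\<bar> \<Longrightarrow> \<tau> x = 0" and "0 < \<epsilon>"
  obtains t where "t \<in> trig_poly" "\<And>x. x \<in> {-pi..pi} \<Longrightarrow> \<bar>\<tau> x - t x\<bar> < \<epsilon>"
proof -
  obtain g where "real_polynomial_function g"
    and g: "\<And>z. z \<in> sphere 0 1 \<Longrightarrow> \<bar>\<tau> (Arg z) - g z\<bar> < \<epsilon>"
    using Stone_Weierstrass_real_polynomial_function[OF compact_sphere
        continuous_on_sphere_comp_Arg[OF assms(1-4)] \<open>0 < \<epsilon>\<close>] by blast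
  have "\<tau> (Arg (cis x)) = \<tau> x" if "x \<in> {-pi..pi}" for x
  proof (cases "x = - pi")
    case True
    then have "Arg (cis x) = pi"
      using Arg_cis[of pi] by (simp add: cis.ctr)
    then show ?thesis
      using True vanish[of pi] vanish[of "- pi"] \<open>0 < \<delta>\<close> by simp
  next
    case False
    with that show ?thesis
      by (subst Arg_cis) auto
  qed
  then have "\<bar>\<tau> x - g (cis x)\<bar> < \<epsilon>" if "x \<in> {-pi..pi}" for x
    using g[of "cis x"] that by simp
  then show ?thesis
    using trig_poly_of_real_polynomial_function[OF \<open>real_polynomial_function g\<close>] that by blast
qed

definition ramp :: "real \<Rightarrow> real \<Rightarrow> real \<Rightarrow> real" where
  "ramp h a x = max 0 (min 1 (min ((x + pi) / h - 1) ((min a (pi - h) - x) / h)))"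

lemma continuous_on_ramp: "0 < h \<Longrightarrow> continuous_on A (ramp h a)"
  unfolding ramp_def[abs_def] by (intro continuous_intros) auto

lemma abs_ramp_le: "\<bar>ramp h a x\<bar> \<le> 1"
  by (simp add: ramp_def)

lemma ramp_vanishes:
  assumes "0 < h" "pi - h \<le> \<bar>x\<bar>"
  shows "ramp h a x = 0"
proof (cases "0 \<le> x")
  case True
  then have "(min a (pi - h) - x) / h \<le> 0"
    using assms by (simp add: divide_nonpos_pos)
  then show ?thesis
    by (simp add: ramp_def)
next
  case False
  then have "(x + pi) / h \<le> 1"
    using assms by simp
  then show ?thesis
    by (simp add: ramp_def)
qed

lemma indicator_minus_ramp_sq_le:
  fixes h a x :: real
  defines "c \<equiv> min a (pi - h)"
  assumes "0 < h" "-pi \<le> x" "x < pi"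
  shows "(indicator {..a} x - ramp h a x)\<^sup>2 \<le> indicator ({-pi..-pi + 2 * h} \<union> {c - h..c} \<union> {pi - h..pi}) x"
proof (cases "x \<in> {-pi..-pi + 2 * h} \<union> {c - h..c} \<union> {pi - h..pi}")
  case True
  have "\<bar>indicator {..a} x - ramp h a x\<bar> \<le> 1"
    using abs_ramp_le[of h a x] by (auto simp: ramp_def split: split_indicator)
  then show ?thesis
    using True by (simp add: abs_le_square_iff[of _ 1, simplified])
next
  case False
  then have x: "-pi + 2 * h < x" "x < c - h \<or> c < x" "x < pi - h"
    using assms(3,4) by auto
  show ?thesis
  proof (cases "x \<le> a")
    case True
    then have "x < c - h"
      using x by (auto simp: c_def)
    then have "ramp h a x = 1"
      using x(1) \<open>0 < h\<close> by (simp add: ramp_def c_def[symmetric] field_simps)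
    then show ?thesis
      using True False by simp
  next
    case False
    then have "(c - x) / h \<le> 0"
      using \<open>0 < h\<close> by (simp add: c_def divide_nonpos_pos)
    then show ?thesis
      using False by (simp add: ramp_def c_def[symmetric])
  qed
qed

text \<open>On \<open>[-\<pi>, \<pi>)\<close> the ramp differs from the indicator of \<open>{..a}\<close> only on three intervals
  of total length at most \<open>4h\<close>.\<close>

lemma integral_indicator_minus_ramp_le:
  assumes "0 < h"
  shows "(\<integral>x. (indicator {..a} x - ramp h a x)\<^sup>2 \<partial>circle_measure) \<le> 2 * h / pi"
proof -
  define c where "c = min a (pi - h)"
  define B where "B = {-pi..-pi + 2 * h} \<union> {c - h..c} \<union> {pi - h..pi}"
  have "(\<integral>x. (indicator {..a} x - ramp h a x)\<^sup>2 \<partial>circle_measure) \<le> (\<integral>x. indicator B x \<partial>circle_measure)"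
  proof (rule integral_mono_AE)
    have [measurable]: "ramp h a \<in> borel_measurable borel"
      by (rule borel_measurable_continuous_onI[OF continuous_on_ramp[OF assms]])
    have "\<bar>indicator {..a} x - ramp h a x\<bar> \<le> 2" for x
      using abs_ramp_le[of h a x] by (auto split: split_indicator)
    then show "integrable circle_measure (\<lambda>x. (indicator {..a} x - ramp h a x)\<^sup>2)"
      by (intro integrable_circle_bounded[where B=4]) (auto simp: abs_le_square_iff[of _ 2, simplified])
    show "integrable circle_measure (indicator B :: real \<Rightarrow> real)"
      by (intro integrable_circle_bounded[where B=1]) (auto simp: B_def split: split_indicator)
    show "AE x in circle_measure. (indicator {..a} x - ramp h a x)\<^sup>2 \<le> indicator B x"
      using AE_circle_measure
      by eventually_elim (use indicator_minus_ramp_sq_le[OF assms] in \<open>simp add: B_def c_def\<close>)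
  qed
  also have "\<dots> = measure circle_measure B"
    by (simp add: B_def)
  also have "\<dots> \<le> measure circle_measure ({-pi..-pi + 2 * h} \<union> {c - h..c}) + measure circle_measure {pi - h..pi}"
    unfolding B_def by (rule measure_Un_le) auto
  also have "\<dots> \<le> measure circle_measure {-pi..-pi + 2 * h} + measure circle_measure {c - h..c}
      + measure circle_measure {pi - h..pi}"
    by (simp add: measure_Un_le)
  also have "\<dots> \<le> 2 * h / (2 * pi) + h / (2 * pi) + h / (2 * pi)"
    using assms by (intro add_mono measure_circle_Icc_le[THEN order_trans]) auto
  also have "\<dots> = 2 * h / pi"
    by (simp add: field_simps)
  finally show ?thesis .
qed

lemma integral_circle_square_le_uniform:
  fixes f :: "real \<Rightarrow> real" and B :: real
  assumes [measurable]: "f \<in> borel_measurable borel" and "\<And>x. \<bar>f x\<bar> \<le> B"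
    and uniform: "\<And>x. x \<in> {-pi..pi} \<Longrightarrow> \<bar>f x\<bar> \<le> \<eta>"
  shows "(\<integral>x. (f x)\<^sup>2 \<partial>circle_measure) \<le> \<eta>\<^sup>2"
proof -
  have "(\<integral>x. (f x)\<^sup>2 \<partial>circle_measure) \<le> (\<integral>x. \<eta>\<^sup>2 \<partial>circle_measure)"
  proof (rule integral_mono_AE)
    show "integrable circle_measure (\<lambda>x. (f x)\<^sup>2)"
      using power_mono[OF assms(2) abs_ge_zero, of _ 2]
      by (intro integrable_circle_bounded[where B="B\<^sup>2"]) auto
    show "AE x in circle_measure. (f x)\<^sup>2 \<le> \<eta>\<^sup>2"
      using AE_circle_measure
      by eventually_elim (use power_mono[OF uniform abs_ge_zero, of _ 2] in auto)
  qed simp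
  then show ?thesis
    using circle.prob_space by simp
qed

lemma trig_poly_approximation_indicator_atMost:
  assumes "0 < \<epsilon>"
  obtains t where "t \<in> trig_poly" "\<And>x. x \<in> {-pi..pi} \<Longrightarrow> \<bar>t x\<bar> \<le> 2"
    "(\<integral>x. (indicator {..a} x - t x)\<^sup>2 \<partial>circle_measure) < \<epsilon>"
proof -
  define h where "h = min 1 (\<epsilon> / 4)"
  define \<eta> where "\<eta> = min 1 (sqrt \<epsilon> / 2)"
  have h: "0 < h" "h \<le> 1" "h \<le> \<epsilon> / 4" and \<eta>: "0 < \<eta>" "\<eta> \<le> 1"
    using \<open>0 < \<epsilon>\<close> by (auto simp: h_def \<eta>_def)
  have "\<eta>\<^sup>2 \<le> (sqrt \<epsilon> / 2)\<^sup>2"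
    using \<eta>(1) by (intro power_mono) (auto simp: \<eta>_def)
  with \<open>0 < \<epsilon>\<close> have \<eta>_sq: "\<eta>\<^sup>2 \<le> \<epsilon> / 4"
    by (simp add: power_divide)
  have cont: "continuous_on UNIV (ramp h a)"
    by (rule continuous_on_ramp[OF h(1)])
  obtain t where t: "t \<in> trig_poly" and close: "\<And>x. x \<in> {-pi..pi} \<Longrightarrow> \<bar>ramp h a x - t x\<bar> < \<eta>"
    using trig_poly_uniform_approximation[OF cont h(1) _ ramp_vanishes[OF h(1)] \<eta>(1)] h(2) pi_gt3
    by auto
  have [measurable]: "ramp h a \<in> borel_measurable borel" "t \<in> borel_measurable borel"
    using borel_measurable_continuous_onI[OF cont] borel_measurable_trig_poly[OF t] .
  obtain C where C: "\<And>x. \<bar>t x\<bar> \<le> C"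
    using fun_span_bounded[OF abs_trig_basis_le t] by blast
  have "(\<integral>x. (indicator {..a} x - t x)\<^sup>2 \<partial>circle_measure)
      \<le> 2 * (\<integral>x. (indicator {..a} x - ramp h a x)\<^sup>2 \<partial>circle_measure)
        + 2 * (\<integral>x. (ramp h a x - t x)\<^sup>2 \<partial>circle_measure)"
    using abs_ramp_le C
    by (intro integral_square_diff_le circle.square_integrable_bounded) (auto split: split_indicator)
  also have "(\<integral>x. (ramp h a x - t x)\<^sup>2 \<partial>circle_measure) \<le> \<eta>\<^sup>2"
  proof (rule integral_circle_square_le_uniform[where B="1 + C"])
    show "\<bar>ramp h a x - t x\<bar> \<le> 1 + C" for x
      using abs_triangle_ineq4[of "ramp h a x" "t x"] abs_ramp_le[of h a x] C[of x] by linarith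
  qed (use close in \<open>auto intro: less_imp_le\<close>)
  also have "2 * (\<integral>x. (indicator {..a} x - ramp h a x)\<^sup>2 \<partial>circle_measure) + 2 * \<eta>\<^sup>2 < \<epsilon>"
  proof -
    have "2 * h / pi < h"
      using h(1) pi_gt3 by (simp add: field_simps)
    then show ?thesis
      using integral_indicator_minus_ramp_le[OF h(1), of a] h \<eta>_sq by simp
  qed
  moreover have "\<bar>t x\<bar> \<le> 2" if "x \<in> {-pi..pi}" for x
    using close[OF that] abs_ramp_le[of h a x] \<eta>(2) by linarith
  ultimately show ?thesis
    using that t by (meson add_left_mono mult_left_mono order_le_less_trans zero_le_numeral)
qed

abbreviation torus_trig_poly :: "(real \<times> real \<Rightarrow> real) set" where
  "torus_trig_poly \<equiv> fun_span torus_basis"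

lemma tensor_in_torus_trig_poly:
  assumes "f \<in> trig_poly" "g \<in> trig_poly"
  shows "(\<lambda>z. f (fst z) * g (snd z)) \<in> torus_trig_poly"
proof -
  obtain Q c R d where "finite Q" "finite R"
    and f: "f = (\<lambda>x. \<Sum>k\<in>Q. c k * trig_basis k x)" and g: "g = (\<lambda>y. \<Sum>l\<in>R. d l * trig_basis l y)"
    using assms by (elim fun_spanE)
  have "(\<lambda>z. f (fst z) * g (snd z)) = (\<lambda>z. \<Sum>q\<in>Q \<times> R. (c (fst q) * d (snd q)) * torus_basis q z)"
    by (simp add: f g sum_product sum.cartesian_product torus_basis_def case_prod_unfold mult_ac)
  then show ?thesis
    using \<open>finite Q\<close> \<open>finite R\<close> by (simp add: fun_spanI)
qed

lemma integral_torus_fst: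
  fixes f :: "real \<Rightarrow> real" and B :: real
  assumes "f \<in> borel_measurable borel" "\<And>x. \<bar>f x\<bar> \<le> B"
  shows "(\<integral>z. f (fst z) \<partial>torus_measure) = integral\<^sup>L circle_measure f"
  using integral_torus_tensor[OF assms(1) _ assms(2), of "\<lambda>_. 1" 1] circle.prob_space by simp

lemma integral_torus_snd:
  fixes f :: "real \<Rightarrow> real" and B :: real
  assumes "f \<in> borel_measurable borel" "\<And>x. \<bar>f x\<bar> \<le> B"
  shows "(\<integral>z. f (snd z) \<partial>torus_measure) = integral\<^sup>L circle_measure f"
  using integral_torus_tensor[OF _ assms(1) _ assms(2), of "\<lambda>_. 1" 1] circle.prob_space by simp

lemma tensor_diff_square_le:
  fixes A B s t :: real
  assumes "\<bar>B\<bar> \<le> 1" "\<bar>s\<bar> \<le> 2"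
  shows "(A * B - s * t)\<^sup>2 \<le> 2 * (A - s)\<^sup>2 + 8 * (B - t)\<^sup>2"
proof -
  have "B\<^sup>2 \<le> 1" "s\<^sup>2 \<le> 4"
    using assms by (simp_all add: abs_le_square_iff[of _ 1, simplified] abs_le_square_iff[of _ 2, simplified])
  have "(A * B - s * t)\<^sup>2 = ((A - s) * B + s * (B - t))\<^sup>2"
    by (simp add: algebra_simps)
  also have "\<dots> \<le> 2 * ((A - s) * B)\<^sup>2 + 2 * (s * (B - t))\<^sup>2"
    using sum_squares_bound[of "(A - s) * B" "s * (B - t)"] by (simp only: power2_sum)
  also have "\<dots> = 2 * ((A - s)\<^sup>2 * B\<^sup>2) + 2 * (s\<^sup>2 * (B - t)\<^sup>2)"
    by (simp only: power_mult_distrib)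
  also have "\<dots> \<le> 2 * (A - s)\<^sup>2 + 8 * (B - t)\<^sup>2"
    using \<open>B\<^sup>2 \<le> 1\<close> \<open>s\<^sup>2 \<le> 4\<close> by (intro add_mono) (auto intro: mult_left_le mult_right_mono)
  finally show ?thesis .
qed

lemma integral_torus_tensor_error_le:
  assumes "s \<in> trig_poly" "t \<in> trig_poly" and s2: "\<And>x. x \<in> {-pi..pi} \<Longrightarrow> \<bar>s x\<bar> \<le> 2"
  shows "(\<integral>z. (indicator {..(a, b)} z - s (fst z) * t (snd z))\<^sup>2 \<partial>torus_measure)
    \<le> 2 * (\<integral>x. (indicator {..a} x - s x)\<^sup>2 \<partial>circle_measure)
      + 8 * (\<integral>y. (indicator {..b} y - t y)\<^sup>2 \<partial>circle_measure)"
proof -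
  have [measurable]: "s \<in> borel_measurable borel" "t \<in> borel_measurable borel"
    using assms(1,2) by (simp_all add: borel_measurable_trig_poly)
  obtain Cs where Cs: "\<And>x. \<bar>s x\<bar> \<le> Cs"
    using fun_span_bounded[OF abs_trig_basis_le assms(1)] by blast
  obtain Ct where Ct: "\<And>x. \<bar>t x\<bar> \<le> Ct"
    using fun_span_bounded[OF abs_trig_basis_le assms(2)] by blast
  have indicator_ab: "indicator {..(a, b)} z = indicator {..a} (fst z) * (indicator {..b} (snd z) :: real)"
    for z
    by (auto simp: less_eq_prod_def split: split_indicator)
  define F where "F x = (indicator {..a} x - s x)\<^sup>2" for x
  define G where "G y = (indicator {..b} y - t y)\<^sup>2" for y
  have F_le: "\<bar>F x\<bar> \<le> (1 + Cs)\<^sup>2" and G_le: "\<bar>G x\<bar> \<le> (1 + Ct)\<^sup>2" for x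
    using Cs[of x] Ct[of x]
    by (auto simp: F_def G_def abs_le_square_iff[symmetric] split: split_indicator)
  have [measurable]: "F \<in> borel_measurable borel" "G \<in> borel_measurable borel"
    unfolding F_def[abs_def] G_def[abs_def] by measurable
  have int_F: "integrable torus_measure (\<lambda>z. F (fst z))"
    by (rule integrable_torus_bounded[OF _ F_le]) (unfold torus_measure_eq_pair, measurable)
  have int_G: "integrable torus_measure (\<lambda>z. G (snd z))"
    by (rule integrable_torus_bounded[OF _ G_le]) (unfold torus_measure_eq_pair, measurable)
  have "(\<integral>z. (indicator {..(a, b)} z - s (fst z) * t (snd z))\<^sup>2 \<partial>torus_measure)
      \<le> (\<integral>z. 2 * F (fst z) + 8 * G (snd z) \<partial>torus_measure)"
  proof (rule integral_mono_AE)
    have "\<bar>indicator {..(a, b)} z - s (fst z) * t (snd z)\<bar> \<le> 1 + Cs * Ct" for z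
    proof -
      have "\<bar>s (fst z) * t (snd z)\<bar> \<le> Cs * Ct"
        using Cs Ct order_trans[OF abs_ge_zero Cs] by (auto simp: abs_mult intro!: mult_mono)
      moreover have "\<bar>indicator {..(a, b)} z :: real\<bar> \<le> 1"
        by (simp split: split_indicator)
      ultimately show ?thesis
        using abs_triangle_ineq4[of "indicator {..(a, b)} z" "s (fst z) * t (snd z)"] by linarith
    qed
    then have "\<bar>(indicator {..(a, b)} z - s (fst z) * t (snd z))\<^sup>2\<bar> \<le> (1 + Cs * Ct)\<^sup>2" for z
      using power_mono[OF _ abs_ge_zero, of "indicator {..(a, b)} z - s (fst z) * t (snd z)" _ 2]
      by simp
    then show "integrable torus_measure (\<lambda>z. (indicator {..(a, b)} z - s (fst z) * t (snd z))\<^sup>2)"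
      by (intro integrable_torus_bounded) (unfold torus_measure_eq_pair indicator_ab, measurable)
    show "integrable torus_measure (\<lambda>z. 2 * F (fst z) + 8 * G (snd z))"
      using int_F int_G by simp
    show "AE z in torus_measure. (indicator {..(a, b)} z - s (fst z) * t (snd z))\<^sup>2
        \<le> 2 * F (fst z) + 8 * G (snd z)"
      using AE_torus_measure
    proof eventually_elim
      case (elim z)
      show ?case
        unfolding F_def G_def indicator_ab
        by (rule tensor_diff_square_le) (use elim s2 in \<open>auto split: split_indicator\<close>)
    qed
  qed
  also have "\<dots> = 2 * integral\<^sup>L circle_measure F + 8 * integral\<^sup>L circle_measure G"
    using int_F int_G integral_torus_fst[of F, OF _ F_le] integral_torus_snd[of G, OF _ G_le] by simp
  finally show ?thesis
    by (simp add: F_def[abs_def] G_def[abs_def])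
qed

lemma approximable_indicator_atMost_torus:
  "L2_approximable torus_measure torus_trig_poly (indicator {..p})"
  unfolding L2_approximable_def
proof (intro conjI allI impI)
  show "square_integrable torus_measure (indicator {..p})"
    by (intro torus.square_integrable_bounded[where B=1]) (auto split: split_indicator)
  obtain a b where p: "p = (a, b)"
    by force
  fix \<epsilon> :: real assume "0 < \<epsilon>"
  then have "0 < \<epsilon> / 10"
    by simp
  then obtain s where "s \<in> trig_poly" and s2: "\<And>x. x \<in> {-pi..pi} \<Longrightarrow> \<bar>s x\<bar> \<le> 2"
    and s: "(\<integral>x. (indicator {..a} x - s x)\<^sup>2 \<partial>circle_measure) < \<epsilon> / 10"
    using trig_poly_approximation_indicator_atMost[where a=a] by blast
  obtain t where "t \<in> trig_poly"
    and t: "(\<integral>y. (indicator {..b} y - t y)\<^sup>2 \<partial>circle_measure) < \<epsilon> / 10"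
    using trig_poly_approximation_indicator_atMost[where a=b] \<open>0 < \<epsilon> / 10\<close> by blast
  have "(\<integral>z. (indicator {..p} z - s (fst z) * t (snd z))\<^sup>2 \<partial>torus_measure) < \<epsilon>"
    using integral_torus_tensor_error_le[OF \<open>s \<in> trig_poly\<close> \<open>t \<in> trig_poly\<close> s2, of a b] s t
    unfolding p by linarith
  then show "\<exists>u\<in>torus_trig_poly. (\<integral>z. (indicator {..p} z - u z)\<^sup>2 \<partial>torus_measure) < \<epsilon>"
    using tensor_in_torus_trig_poly[OF \<open>s \<in> trig_poly\<close> \<open>t \<in> trig_poly\<close>]
    by (intro bexI[of _ "\<lambda>z. s (fst z) * t (snd z)"]) simp_all
qed

lemma square_integrable_torus_trig_poly:
  assumes "f \<in> torus_trig_poly"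
  shows "square_integrable torus_measure f"
proof -
  obtain C where "\<And>z. \<bar>f z\<bar> \<le> C"
    using fun_span_bounded[OF abs_torus_basis_le assms] by blast
  moreover have "f \<in> borel_measurable torus_measure"
    using borel_measurable_continuous_onI[OF fun_span_continuous_on[OF continuous_on_torus_basis assms]]
    by (simp add: measurable_cong_sets[OF sets_torus_measure refl])
  ultimately show ?thesis
    by (intro torus.square_integrable_bounded) auto
qed

interpretation torus_L2: L2_approximation torus_measure torus_trig_poly
proof
  show "(\<lambda>z. c) \<in> torus_trig_poly" for c
    using fun_span_scale[OF fun_span_basis[of torus_basis "(0, 0)"], of c]
    by (simp add: torus_basis_def)
qed (simp_all add: square_integrable_torus_trig_poly fun_span_add fun_span_scale)

lemma Int_stable_atMost_prod: "Int_stable (range (atMost :: real \<times> real \<Rightarrow> _))"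
proof (rule Int_stableI)
  fix A B :: "(real \<times> real) set" assume "A \<in> range atMost" "B \<in> range atMost"
  then obtain a b c d :: real where "A = {..(a, b)}" "B = {..(c, d)}"
    by auto
  then have "A \<inter> B = {..(min a c, min b d)}"
    by (auto simp: less_eq_prod_def)
  then show "A \<inter> B \<in> range atMost"
    by blast
qed

theorem torus_trig_poly_dense:
  "square_integrable torus_measure f \<Longrightarrow> L2_approximable torus_measure torus_trig_poly f"
proof (rule torus_L2.approximable_square_integrable[where G="range atMost"])
  show "sets torus_measure = sigma_sets (space torus_measure) (range atMost)"
    by (simp add: borel_eq_atMost sets_measure_of[of "range atMost" UNIV])
qed (auto simp: Int_stable_atMost_prod approximable_indicator_atMost_torus)

section \<open>The Poincare inequality on the torus\<close>

lemma torus_Parseval_approximation: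
  assumes u: "square_integrable torus_measure u" and "0 < \<epsilon>"
  obtains N where "0 \<le> N"
    "(\<integral>z. (u z)\<^sup>2 \<partial>torus_measure) \<le> (\<Sum>q\<in>{-N..N} \<times> {-N..N}. (torus_coeff u q)\<^sup>2) + \<epsilon>"
proof -
  obtain t where "t \<in> torus_trig_poly" and t: "(\<integral>z. (u z - t z)\<^sup>2 \<partial>torus_measure) < \<epsilon>"
    using torus_trig_poly_dense[OF u] \<open>0 < \<epsilon>\<close> unfolding L2_approximable_def by blast
  then obtain Q c where "finite Q" and t_eq: "t = (\<lambda>z. \<Sum>q\<in>Q. c q * torus_basis q z)"
    by (elim fun_spanE)
  define N where "N = (\<Sum>q\<in>Q. \<bar>fst q\<bar> + \<bar>snd q\<bar>)"
  have "\<bar>fst q\<bar> + \<bar>snd q\<bar> \<le> N" if "q \<in> Q" for q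
    unfolding N_def using \<open>finite Q\<close> that by (intro member_le_sum) auto
  then have Q: "Q \<subseteq> {-N..N} \<times> {-N..N}"
    by force
  have "t = (\<lambda>z. \<Sum>q\<in>{-N..N} \<times> {-N..N}. (if q \<in> Q then c q else 0) * torus_basis q z)"
    unfolding t_eq using Q by (intro ext sum.mono_neutral_cong_left) auto
  then have "(\<integral>z. (u z)\<^sup>2 \<partial>torus_measure) - (\<Sum>q\<in>{-N..N} \<times> {-N..N}. (torus_coeff u q)\<^sup>2)
      \<le> (\<integral>z. (u z - t z)\<^sup>2 \<partial>torus_measure)"
    using orthonormal_best_approximation[OF u _ square_integrable_torus_trig_poly[OF fun_span_basis]
        torus_basis_orthonormal, of "{-N..N} \<times> {-N..N}" "\<lambda>q. if q \<in> Q then c q else 0"]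
    by (simp add: torus_coeff_def)
  with t have "(\<integral>z. (u z)\<^sup>2 \<partial>torus_measure) \<le> (\<Sum>q\<in>{-N..N} \<times> {-N..N}. (torus_coeff u q)\<^sup>2) + \<epsilon>"
    by linarith
  moreover have "0 \<le> N"
    unfolding N_def by (intro sum_nonneg) simp
  ultimately show ?thesis
    using that by blast
qed

lemma sum_reflect_fst: "(\<Sum>q\<in>{-N..N} \<times> {-N..N}. f (- fst q, snd q)) = (\<Sum>q\<in>{-N..N} \<times> {-N..N}. f q)"
  for N :: int
  by (rule sum.reindex_bij_witness[of _ "\<lambda>q. (- fst q, snd q)" "\<lambda>q. (- fst q, snd q)"]) auto

lemma sum_reflect_snd: "(\<Sum>q\<in>{-N..N} \<times> {-N..N}. f (fst q, - snd q)) = (\<Sum>q\<in>{-N..N} \<times> {-N..N}. f q)"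
  for N :: int
  by (rule sum.reindex_bij_witness[of _ "\<lambda>q. (fst q, - snd q)" "\<lambda>q. (fst q, - snd q)"]) auto

text \<open>Bessel's inequality for the weak gradient, read through the Fourier coefficients of \<open>u\<close>.\<close>

lemma sum_frequency_coeff_le_grad_L2_sq:
  assumes H1: "H1_weak_gradient u g1 g2"
  shows "(\<Sum>q\<in>{-N..N} \<times> {-N..N}. ((of_int (fst q))\<^sup>2 + (of_int (snd q))\<^sup>2) * (torus_coeff u q)\<^sup>2)
    \<le> grad_L2_sq g1 g2"
proof -
  have g: "square_integrable torus_measure g1" "square_integrable torus_measure g2"
    using H1 by (simp_all add: H1_weak_gradient_def square_integrable_torus_iff)
  have Bessel: "(\<Sum>q\<in>{-N..N} \<times> {-N..N}. (torus_coeff g q)\<^sup>2) \<le> (\<integral>z. (g z)\<^sup>2 \<partial>torus_measure)"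
    if "square_integrable torus_measure g" for g
    unfolding torus_coeff_def
    by (rule Bessel_inequality[OF that _ square_integrable_torus_trig_poly[OF fun_span_basis]
          torus_basis_orthonormal]) simp
  have "(\<Sum>q\<in>{-N..N} \<times> {-N..N}. (of_int (fst q))\<^sup>2 * (torus_coeff u q)\<^sup>2)
      = (\<Sum>q\<in>{-N..N} \<times> {-N..N}. (torus_coeff g1 (- fst q, snd q))\<^sup>2)"
    using torus_coeff_weak_gradient(1)[OF H1] by (simp add: power_mult_distrib)
  also have "\<dots> = (\<Sum>q\<in>{-N..N} \<times> {-N..N}. (torus_coeff g1 q)\<^sup>2)"
    by (rule sum_reflect_fst)
  finally have 1: "(\<Sum>q\<in>{-N..N} \<times> {-N..N}. (of_int (fst q))\<^sup>2 * (torus_coeff u q)\<^sup>2)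
      \<le> (\<integral>z. (g1 z)\<^sup>2 \<partial>torus_measure)"
    using Bessel[OF g(1)] by simp
  have "(\<Sum>q\<in>{-N..N} \<times> {-N..N}. (of_int (snd q))\<^sup>2 * (torus_coeff u q)\<^sup>2)
      = (\<Sum>q\<in>{-N..N} \<times> {-N..N}. (torus_coeff g2 (fst q, - snd q))\<^sup>2)"
    using torus_coeff_weak_gradient(2)[OF H1] by (simp add: power_mult_distrib)
  also have "\<dots> = (\<Sum>q\<in>{-N..N} \<times> {-N..N}. (torus_coeff g2 q)\<^sup>2)"
    by (rule sum_reflect_snd)
  finally have 2: "(\<Sum>q\<in>{-N..N} \<times> {-N..N}. (of_int (snd q))\<^sup>2 * (torus_coeff u q)\<^sup>2)
      \<le> (\<integral>z. (g2 z)\<^sup>2 \<partial>torus_measure)"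
    using Bessel[OF g(2)] by simp
  have "grad_L2_sq g1 g2 = (\<integral>z. (g1 z)\<^sup>2 \<partial>torus_measure) + (\<integral>z. (g2 z)\<^sup>2 \<partial>torus_measure)"
    using g unfolding grad_L2_sq_def square_integrable_def by (simp add: Bochner_Integration.integral_add)
  with 1 2 show ?thesis
    by (simp add: distrib_right sum.distrib)
qed

lemma one_le_sum_of_int_squares:
  assumes "(k, l) \<noteq> (0, 0)"
  shows "1 \<le> (of_int k)\<^sup>2 + ((of_int l)\<^sup>2 :: real)"
proof -
  have "1 \<le> k\<^sup>2 + l\<^sup>2"
    using assms by (auto simp: int_one_le_iff_zero_less add_pos_nonneg add_nonneg_pos)
  then have "of_int 1 \<le> (of_int (k\<^sup>2 + l\<^sup>2) :: real)"
    by (simp only: of_int_le_iff)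
  then show ?thesis
    by simp
qed

theorem Poincare_Wirtinger_torus:
  assumes H1: "H1_weak_gradient u g1 g2"
  shows "(\<integral>z. (u z)\<^sup>2 \<partial>torus_measure) \<le> grad_L2_sq g1 g2 + (\<integral>z. u z \<partial>torus_measure)\<^sup>2"
proof (rule field_le_epsilon)
  fix \<epsilon> :: real assume "0 < \<epsilon>"
  have u: "square_integrable torus_measure u"
    using H1 by (simp add: H1_weak_gradient_def square_integrable_torus_iff)
  obtain N where "0 \<le> N"
    and N: "(\<integral>z. (u z)\<^sup>2 \<partial>torus_measure) \<le> (\<Sum>q\<in>{-N..N} \<times> {-N..N}. (torus_coeff u q)\<^sup>2) + \<epsilon>"
    using torus_Parseval_approximation[OF u \<open>0 < \<epsilon>\<close>] by blast
  have "(torus_coeff u q)\<^sup>2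
      \<le> (if q = (0, 0) then (torus_coeff u q)\<^sup>2 else 0)
        + ((of_int (fst q))\<^sup>2 + (of_int (snd q))\<^sup>2) * (torus_coeff u q)\<^sup>2" for q
  proof (cases "q = (0, 0)")
    case False
    then have "1 \<le> (of_int (fst q))\<^sup>2 + ((of_int (snd q))\<^sup>2 :: real)"
      by (cases q) (simp add: one_le_sum_of_int_squares)
    then show ?thesis
      using False mult_right_mono[of 1 _ "(torus_coeff u q)\<^sup>2"] by simp
  qed simp
  then have "(\<Sum>q\<in>{-N..N} \<times> {-N..N}. (torus_coeff u q)\<^sup>2)
      \<le> (\<Sum>q\<in>{-N..N} \<times> {-N..N}. (if q = (0, 0) then (torus_coeff u q)\<^sup>2 else 0)
        + ((of_int (fst q))\<^sup>2 + (of_int (snd q))\<^sup>2) * (torus_coeff u q)\<^sup>2)"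
    by (rule sum_mono)
  also have "\<dots> = (\<integral>z. u z \<partial>torus_measure)\<^sup>2
      + (\<Sum>q\<in>{-N..N} \<times> {-N..N}. ((of_int (fst q))\<^sup>2 + (of_int (snd q))\<^sup>2) * (torus_coeff u q)\<^sup>2)"
    using \<open>0 \<le> N\<close> by (simp add: sum.distrib torus_coeff_def[of u "(0, 0)"] torus_basis_def)
  finally show "(\<integral>z. (u z)\<^sup>2 \<partial>torus_measure) \<le> grad_L2_sq g1 g2 + (\<integral>z. u z \<partial>torus_measure)\<^sup>2 + \<epsilon>"
    using N sum_frequency_coeff_le_grad_L2_sq[OF H1, of N] by linarith
qed

section \<open>Mean and \<open>L\<^sup>p\<close> norm\<close>

lemma powr_above_tangent:
  fixes p m t :: real
  assumes "1 \<le> p" "0 < m" "0 \<le> t"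
  shows "m powr p + p * m powr (p - 1) * (t - m) \<le> t powr p"
proof (cases "t = 0")
  case True
  have "m powr (p - 1) * m = m powr p"
    using \<open>0 < m\<close> by (simp add: mult.commute powr_mult_base)
  then have "m powr p + p * m powr (p - 1) * (0 - m) = (1 - p) * m powr p"
    by (simp add: algebra_simps)
  also have "\<dots> \<le> 0"
    using assms by (simp add: mult_nonpos_nonneg)
  finally show ?thesis
    using True by simp
next
  case False
  have "p * m powr (p - 1) * (t - m) \<le> t powr p - m powr p"
  proof (rule convex_on_imp_above_tangent[where A="{0<..}"])
    show "((\<lambda>x. x powr p) has_field_derivative p * m powr (p - 1)) (at m within {0<..})"
      using has_real_derivative_powr[OF \<open>0 < m\<close>] by (rule has_field_derivative_at_within)
  qed (use assms False powr_convex in \<open>auto simp: interior_open\<close>)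
  then show ?thesis
    by simp
qed

text \<open>Lyapunov's inequality \<open>\<parallel>f\<parallel>\<^sub>1 \<le> \<parallel>f\<parallel>\<^sub>p\<close> on a probability space, by integrating the supporting line
  of \<open>x \<mapsto> x\<^sup>p\<close> at the mean of \<open>\<bar>f\<bar>\<close>.\<close>

lemma (in prob_space) integral_abs_le_Lp:
  fixes f :: "'a \<Rightarrow> real"
  assumes "1 \<le> p" and f: "integrable M f" and fp: "integrable M (\<lambda>x. \<bar>f x\<bar> powr p)"
  shows "(\<integral>x. \<bar>f x\<bar> \<partial>M) \<le> (\<integral>x. \<bar>f x\<bar> powr p \<partial>M) powr (1 / p)"
proof (cases "(\<integral>x. \<bar>f x\<bar> \<partial>M) = 0")
  case False
  define m where "m = (\<integral>x. \<bar>f x\<bar> \<partial>M)"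
  have "0 \<le> m"
    unfolding m_def by (rule Bochner_Integration.integral_nonneg) simp
  with False have "0 < m"
    unfolding m_def by linarith
  have int_abs: "integrable M (\<lambda>x. \<bar>f x\<bar>)"
    using f by (rule integrable_abs)
  have "(\<integral>x. m powr p + p * m powr (p - 1) * (\<bar>f x\<bar> - m) \<partial>M)
      = m powr p + p * m powr (p - 1) * ((\<integral>x. \<bar>f x\<bar> \<partial>M) - m)"
    using int_abs by (simp add: prob_space)
  then have "m powr p = (\<integral>x. m powr p + p * m powr (p - 1) * (\<bar>f x\<bar> - m) \<partial>M)"
    by (simp add: m_def)
  also have "\<dots> \<le> (\<integral>x. \<bar>f x\<bar> powr p \<partial>M)"
    using int_abs fp powr_above_tangent[OF \<open>1 \<le> p\<close> \<open>0 < m\<close>] by (intro integral_mono) auto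
  finally have "(m powr p) powr (1 / p) \<le> (\<integral>x. \<bar>f x\<bar> powr p \<partial>M) powr (1 / p)"
    using \<open>0 < m\<close> \<open>1 \<le> p\<close> by (intro powr_mono2) auto
  then show ?thesis
    using \<open>0 < m\<close> \<open>1 \<le> p\<close> by (simp add: powr_powr m_def)
qed simp

lemma (in finite_measure) integrable_abs_powr_square_integrable:
  assumes "square_integrable M f" "0 \<le> p" "p \<le> 2"
  shows "integrable M (\<lambda>x. \<bar>f x\<bar> powr p)"
proof (rule Bochner_Integration.integrable_bound[of _ "\<lambda>x. 1 + (f x)\<^sup>2"])
  have "\<bar>y\<bar> powr p \<le> 1 + y\<^sup>2" for y :: real
  proof (cases "\<bar>y\<bar> \<le> 1")
    case True
    then have "\<bar>y\<bar> powr p \<le> 1"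
      using assms by (intro powr_le1) auto
    then show ?thesis
      by (simp add: add_increasing2)
  next
    case False
    then have "\<bar>y\<bar> powr p \<le> \<bar>y\<bar> powr 2"
      using assms by (intro powr_mono) auto
    then show ?thesis
      by (simp add: powr_numeral)
  qed
  then show "AE x in M. norm (\<bar>f x\<bar> powr p) \<le> norm (1 + (f x)\<^sup>2)"
    by simp
qed (use assms in \<open>auto simp: square_integrable_def\<close>)

lemma abs_integral_le_Lp_norm:
  assumes "square_integrable torus_measure u" "1 \<le> p" "p \<le> 2"
  shows "\<bar>\<integral>z. u z \<partial>torus_measure\<bar> \<le> Lp_norm p u"
proof -
  have "\<bar>\<integral>z. u z \<partial>torus_measure\<bar> \<le> (\<integral>z. \<bar>u z\<bar> \<partial>torus_measure)"
    by (rule integral_abs_bound)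
  also have "\<dots> \<le> Lp_norm p u"
    unfolding Lp_norm_def using assms
    by (intro torus.integral_abs_le_Lp torus.integrable_square_integrable
        torus.integrable_abs_powr_square_integrable) auto
  finally show ?thesis .
qed

lemma Lp_norm_2_sq:
  "(Lp_norm 2 u)\<^sup>2 = (\<integral>z. (u z)\<^sup>2 \<partial>torus_measure)"
  by (simp add: Lp_norm_def powr_numeral powr_half_sqrt)

theorem proposition3p7:
  fixes p :: real and u g1 g2 :: "real \<times> real \<Rightarrow> real"
  assumes "1 \<le> p" and "p < 2"
    and "H1_weak_gradient u g1 g2"
  shows "grad_L2_sq g1 g2 + (Lp_norm p u)\<^sup>2 \<ge> (Lp_norm 2 u)\<^sup>2"
proof -
  have u: "square_integrable torus_measure u"
    using assms(3) by (simp add: H1_weak_gradient_def square_integrable_torus_iff)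
  have "\<bar>\<integral>z. u z \<partial>torus_measure\<bar> \<le> \<bar>Lp_norm p u\<bar>"
    using abs_integral_le_Lp_norm[OF u assms(1)] assms(2) by simp
  then have "(\<integral>z. u z \<partial>torus_measure)\<^sup>2 \<le> (Lp_norm p u)\<^sup>2"
    by (simp add: abs_le_square_iff)
  then show ?thesis
    using Poincare_Wirtinger_torus[OF assms(3)] by (simp add: Lp_norm_2_sq)
qed

end
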